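(* Let $A=\Bbbk Q/I$ be a finite-dimensional triangular monomial algebra, let $n\ge 0$, and let $x=\sum_{i=1}^k\alpha_i\,(p_i\|b_i)\in\Bbbk(\Gamma_n\|\mathcal B)$ be an irreducible cocycle (with $\alpha_i\in\Bbbk$ nonzero and the pairs $(p_i,b_i)$ pairwise distinct). Then there exist nontrivial paths $\tilde p$ and $\tilde b$ such that for every $1\le i\le k$ there are $a_i,c_i\in\mathcal B$ with $p_i=c_i\,\tilde p\,a_i$ and $b_i=c_i\,\tilde b\,a_i$.
   Context: Let $\Bbbk$ be a field, $Q=(Q_0,Q_1,s,t)$ a finite quiver, and $A=\Bbbk Q/I$ a finite-dimensional monomial algebra, i.e. $I$ is an ideal generated by paths of length at least $2$. $A$ is triangular if $Q$ has no oriented cycles. Let $E=\Bbbk Q_0$, $A^e=A\otimes_\Bbbk A^{\mathrm{op}}$. Paths are written from right to left ($p=\alpha_n\cdots\alpha_1$, $t(\alpha_i)=s(\alpha_{i+1})$); $qp$ is concatenation. $\mathcal B$ = set of paths not in $I$ (a basis of $A$). If $p=bqa$, $q$ is a divisor; $q\le p$ denotes an occurrence with $\mathrm{pre}_p(q)=a$, $\mathrm{suf}_p(q)=b$; suffix/prefix mean $b$/$a$ trivial; proper means $q\ne p$. For $n\ge -1$, a left $n$-ambiguity is a path $p=u_{-1}u_0\cdots u_n$ with $u_{-1}\in Q_0$, $u_0\in Q_1$, $u_i\in\mathcal B$, and for $0\le i\le n-1$, $u_iu_{i+1}\in I$ while no proper suffix of $u_iu_{i+1}$ lies in $I$; a right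 $n$-ambiguity is $p=v_n\cdots v_0v_{-1}$ with $v_{-1}\in Q_0$, $v_0\in Q_1$, $v_i\in\mathcal B$, $v_{i+1}v_i\in I$ and no proper prefix of $v_{i+1}v_i$ in $I$. These notions coincide; $\Gamma_n$ is the set of $n$-ambiguities; decompositions are unique; $\sigma_m(p):=u_0\cdots u_m$, $\pi_m(p):=v_m\cdots v_0$; $\mathrm{Sub}(p)=\{q\in\Gamma_{n-1}:q\le p\}$. Bardzell's resolution: $\mathbb B(A)_{n+1}=A\otimes_E\Bbbk\Gamma_n\otimes_EA$, with $d(1\otimes p\otimes1)=\sum_{q\in\mathrm{Sub}(p)}\mathrm{suf}_p(q)\otimes q\otimes\mathrm{pre}_p(q)$ for $p\in\Gamma_n$, $n$ odd, and $d(1\otimes p\otimes1)=\mathrm{suf}_p(\pi_{n-1}(p))\otimes\pi_{n-1}(p)\otimes1-1\otimes\sigma_{n-1}(p)\otimes\mathrm{pre}_p(\sigma_{n-1}(p))$ for $n$ even. Let $\Bbbk(\Gamma_n\|\mathcal B):=\mathrm{Hom}_{E^e}(\Bbbk\Gamma_n,A)\cong\mathrm{Hom}_{A^e}(\mathbb B(A)_{n+1},A)$; it has basis the maps $(p\|b)$ for $p\in\Gamma_n$, $b\in\mathcal B$ parallel to $p$ (same source and target), where $(p\|b)(q)=b$ if $q=p$ and $0$ for other $q\in\Gamma_n$. The differential $\partial^{n+1}:\Bbbk(\Gamma_{n}\|\mathcal B)\to\Bbbk(\Gamma_{n+1}\|\mathcal B)$ is $(\partial f)(q)=\hat f(d(1\otimes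 q\otimes 1))$, where $\hat f(c\otimes p\otimes a)=c\,f(p)\,a$ (product in $A$). A cocycle is $x$ with $\partial x=0$. A cocycle $x=\sum_{i=1}^k\alpha_i(p_i\|b_i)$ with all $\alpha_i\ne0$ and the $(p_i\|b_i)$ pairwise distinct is irreducible if for every proper nonempty subsequence $1\le i_1<\dots<i_\ell\le k$ ($\ell<k$) and all nonzero $\beta_1,\dots,\beta_\ell\in\Bbbk$, $\partial\big(\sum_{j=1}^\ell\beta_j(p_{i_j}\|b_{i_j})\big)\neq 0$. *)

theory Defs
  imports Main
begin

record ('v, 'e) quiver =
  verts :: "'v set"
  arrs :: "'e set"
  src_of :: "'e \<Rightarrow> 'v"
  tgt_of :: "'e \<Rightarrow> 'v"

text \<open>A path is a start vertex together with its arrows in order of traversal: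
  (v, [a1, ..., an]) stands for the path an ... a1 (written right to left).
  The trivial path at v is (v, []).\<close>
type_synonym ('v, 'e) path = "'v \<times> 'e list"

definition psrc :: "('v, 'e) path \<Rightarrow> 'v" where
  "psrc p = fst p"

definition ptgt :: "('v, 'e) quiver \<Rightarrow> ('v, 'e) path \<Rightarrow> 'v" where
  "ptgt Q p = (if snd p = [] then fst p else tgt_of Q (last (snd p)))"

definition is_path :: "('v, 'e) quiver \<Rightarrow> ('v, 'e) path \<Rightarrow> bool" where
  "is_path Q p \<longleftrightarrow> fst p \<in> verts Q \<and> set (snd p) \<subseteq> arrs Q
     \<and> (snd p \<noteq> [] \<longrightarrow> src_of Q (hd (snd p)) = fst p)
     \<and> (\<forall>i. Suc i < length (snd p) \<longrightarrow> tgt_of Q (snd p ! i) = src_of Q (snd p ! Suc i))"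

text \<open>Concatenation q p (first p, then q), written qp in the paper.\<close>
definition pcat :: "('v, 'e) path \<Rightarrow> ('v, 'e) path \<Rightarrow> ('v, 'e) path" where
  "pcat q p = (fst p, snd p @ snd q)"

definition composable :: "('v, 'e) quiver \<Rightarrow> ('v, 'e) path \<Rightarrow> ('v, 'e) path \<Rightarrow> bool" where
  "composable Q q p \<longleftrightarrow> ptgt Q p = psrc q"

definition parallel :: "('v, 'e) quiver \<Rightarrow> ('v, 'e) path \<Rightarrow> ('v, 'e) path \<Rightarrow> bool" where
  "parallel Q p b \<longleftrightarrow> psrc p = psrc b \<and> ptgt Q p = ptgt Q b"

definition occ :: "('v, 'e) quiver \<Rightarrow> ('v, 'e) path \<Rightarrow> ('v, 'e) path
    \<Rightarrow> ('v, 'e) path \<Rightarrow> ('v, 'e) path \<Rightarrow> bool" where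
  "occ Q q p c a \<longleftrightarrow> is_path Q c \<and> is_path Q a \<and> is_path Q q \<and>
     composable Q q a \<and> composable Q c q \<and> p = pcat c (pcat q a)"

definition divisor :: "('v, 'e) quiver \<Rightarrow> ('v, 'e) path \<Rightarrow> ('v, 'e) path \<Rightarrow> bool" where
  "divisor Q q p \<longleftrightarrow> (\<exists>c a. occ Q q p c a)"

definition is_suffix :: "('v, 'e) quiver \<Rightarrow> ('v, 'e) path \<Rightarrow> ('v, 'e) path \<Rightarrow> bool" where
  "is_suffix Q q r \<longleftrightarrow> is_path Q q \<and> (\<exists>a. is_path Q a \<and> composable Q q a \<and> r = pcat q a)"

definition is_prefix :: "('v, 'e) quiver \<Rightarrow> ('v, 'e) path \<Rightarrow> ('v, 'e) path \<Rightarrow> bool" where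
  "is_prefix Q q r \<longleftrightarrow> is_path Q q \<and> (\<exists>c. is_path Q c \<and> composable Q c q \<and> r = pcat c q)"

text \<open>The ideal I is generated by the set of paths R; a path lies in the monomial
  ideal I iff it has a divisor in R.\<close>
definition inI :: "('v, 'e) quiver \<Rightarrow> ('v, 'e) path set \<Rightarrow> ('v, 'e) path \<Rightarrow> bool" where
  "inI Q R p \<longleftrightarrow> is_path Q p \<and> (\<exists>r\<in>R. divisor Q r p)"

definition monomial_rels :: "('v, 'e) quiver \<Rightarrow> ('v, 'e) path set \<Rightarrow> bool" where
  "monomial_rels Q R \<longleftrightarrow> (\<forall>r\<in>R. is_path Q r \<and> length (snd r) \<ge> 2)"

definition triangular :: "('v, 'e) quiver \<Rightarrow> bool" where
  "triangular Q \<longleftrightarrow> \<not> (\<exists>p. is_path Q p \<and> snd p \<noteq> [] \<and> ptgt Q p = psrc p)"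

definition basis :: "('v, 'e) quiver \<Rightarrow> ('v, 'e) path set \<Rightarrow> ('v, 'e) path set" where
  "basis Q R = {p. is_path Q p \<and> \<not> inI Q R p}"

text \<open>Left product: ws = [u0, u1, ..., um] gives u0 u1 ... um (um traversed first).\<close>
definition lprod :: "('v, 'e) path list \<Rightarrow> ('v, 'e) path" where
  "lprod ws = (psrc (last ws), concat (rev (map snd ws)))"

text \<open>Right product: ws = [v0, v1, ..., vm] gives vm ... v1 v0 (v0 traversed first).\<close>
definition rprod :: "('v, 'e) path list \<Rightarrow> ('v, 'e) path" where
  "rprod ws = (psrc (hd ws), concat (map snd ws))"

definition arrow_path :: "('v, 'e) quiver \<Rightarrow> 'e \<Rightarrow> ('v, 'e) path" where
  "arrow_path Q e = (src_of Q e, [e])"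

text \<open>Left n-ambiguity decomposition p = u_{-1} u0 u1 ... un, ws = [u0, ..., un]
  (u_{-1} = the vertex t(u0) is implicit).\<close>
definition left_decomp :: "('v, 'e) quiver \<Rightarrow> ('v, 'e) path set \<Rightarrow> nat
    \<Rightarrow> ('v, 'e) path list \<Rightarrow> ('v, 'e) path \<Rightarrow> bool" where
  "left_decomp Q R n ws p \<longleftrightarrow> length ws = Suc n
     \<and> (\<exists>e\<in>arrs Q. ws ! 0 = arrow_path Q e)
     \<and> (\<forall>i\<in>{1..n}. ws ! i \<in> basis Q R)
     \<and> (\<forall>i<n. composable Q (ws ! i) (ws ! Suc i)
           \<and> inI Q R (pcat (ws ! i) (ws ! Suc i))
           \<and> (\<forall>q. is_suffix Q q (pcat (ws ! i) (ws ! Suc i)) \<and> q \<noteq> pcat (ws ! i) (ws ! Suc i)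
                  \<longrightarrow> \<not> inI Q R q))
     \<and> p = lprod ws"

text \<open>Right n-ambiguity decomposition p = vn ... v1 v0 v_{-1}, ws = [v0, ..., vn].\<close>
definition right_decomp :: "('v, 'e) quiver \<Rightarrow> ('v, 'e) path set \<Rightarrow> nat
    \<Rightarrow> ('v, 'e) path list \<Rightarrow> ('v, 'e) path \<Rightarrow> bool" where
  "right_decomp Q R n ws p \<longleftrightarrow> length ws = Suc n
     \<and> (\<exists>e\<in>arrs Q. ws ! 0 = arrow_path Q e)
     \<and> (\<forall>i\<in>{1..n}. ws ! i \<in> basis Q R)
     \<and> (\<forall>i<n. composable Q (ws ! Suc i) (ws ! i)
           \<and> inI Q R (pcat (ws ! Suc i) (ws ! i))
           \<and> (\<forall>q. is_prefix Q q (pcat (ws ! Suc i) (ws ! i)) \<and> q \<noteq> pcat (ws ! Suc i) (ws ! i)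
                  \<longrightarrow> \<not> inI Q R q))
     \<and> p = rprod ws"

text \<open>\<Gamma>_n, the set of n-ambiguities (n \<ge> 0), defined via left ambiguities.\<close>
definition Gamma :: "('v, 'e) quiver \<Rightarrow> ('v, 'e) path set \<Rightarrow> nat \<Rightarrow> ('v, 'e) path set" where
  "Gamma Q R n = {p. \<exists>ws. left_decomp Q R n ws p}"

definition sigma :: "('v, 'e) quiver \<Rightarrow> ('v, 'e) path set \<Rightarrow> nat \<Rightarrow> nat
    \<Rightarrow> ('v, 'e) path \<Rightarrow> ('v, 'e) path" where
  "sigma Q R n m p = (THE r. \<exists>ws. left_decomp Q R n ws p \<and> r = lprod (take (Suc m) ws))"

definition pi_amb :: "('v, 'e) quiver \<Rightarrow> ('v, 'e) path set \<Rightarrow> nat \<Rightarrow> nat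
    \<Rightarrow> ('v, 'e) path \<Rightarrow> ('v, 'e) path" where
  "pi_amb Q R n m p = (THE r. \<exists>ws. right_decomp Q R n ws p \<and> r = rprod (take (Suc m) ws))"

definition pre_of :: "('v, 'e) quiver \<Rightarrow> ('v, 'e) path \<Rightarrow> ('v, 'e) path \<Rightarrow> ('v, 'e) path" where
  "pre_of Q p q = (THE a. is_path Q a \<and> composable Q q a \<and> p = pcat q a)"

definition suf_of :: "('v, 'e) quiver \<Rightarrow> ('v, 'e) path \<Rightarrow> ('v, 'e) path \<Rightarrow> ('v, 'e) path" where
  "suf_of Q p q = (THE c. is_path Q c \<and> composable Q c q \<and> p = pcat c q)"

text \<open>Cochains in \<Bbbk>(\<Gamma>_n || \<B>) are represented by their coefficient functions:
  x p b is the coefficient of the basis element (p||b).\<close>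
type_synonym ('v, 'e, 'k) cochain = "('v, 'e) path \<Rightarrow> ('v, 'e) path \<Rightarrow> 'k"

definition cochain_sum :: "(nat \<Rightarrow> 'k::field) \<Rightarrow> (nat \<Rightarrow> ('v, 'e) path) \<Rightarrow> (nat \<Rightarrow> ('v, 'e) path)
    \<Rightarrow> nat set \<Rightarrow> ('v, 'e, 'k) cochain" where
  "cochain_sum \<alpha> p b J = (\<lambda>q b'. \<Sum>i\<in>J. if (p i, b i) = (q, b') then \<alpha> i else 0)"

text \<open>The differential \<partial>^{n+1} : \<Bbbk>(\<Gamma>_n||\<B>) \<rightarrow> \<Bbbk>(\<Gamma>_{n+1}||\<B>) induced by Bardzell's
  resolution: (\<partial>x)(q) = \<hat>x(d(1 \<otimes> q \<otimes> 1)); (delta x q b') is the coefficient of (q||b').\<close>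
definition delta :: "('v, 'e) quiver \<Rightarrow> ('v, 'e) path set \<Rightarrow> nat
    \<Rightarrow> ('v, 'e, 'k::field) cochain \<Rightarrow> ('v, 'e, 'k) cochain" where
  "delta Q R n x = (\<lambda>q b'.
     if q \<in> Gamma Q R (Suc n) \<and> b' \<in> basis Q R \<and> parallel Q q b' then
       (if odd (Suc n) then
          (\<Sum>(c, q', a)\<in>{(c, q', a). q' \<in> Gamma Q R n \<and> occ Q q' q c a}.
             \<Sum>b\<in>{b \<in> basis Q R. parallel Q q' b}.
               x q' b * (if pcat c (pcat b a) = b' then 1 else 0))
        else
          (let \<pi> = pi_amb Q R (Suc n) n q; \<sigma> = sigma Q R (Suc n) n q;
               sf = suf_of Q q \<pi>; pr = pre_of Q q \<sigma> in
             (\<Sum>b\<in>{b \<in> basis Q R. parallel Q \<pi> b}.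
                x \<pi> b * (if pcat sf b = b' then 1 else 0))
           - (\<Sum>b\<in>{b \<in> basis Q R. parallel Q \<sigma> b}.
                x \<sigma> b * (if pcat b pr = b' then 1 else 0))))
     else 0)"

end

theory Submission
  imports Defs "HOL-Library.Sublist"
begin

text \<open>Write a basis element \<open>(p||b)\<close> as its pair of arrow lists. When \<open>p \<noteq> b\<close> are parallel in
  an acyclic quiver, stripping their longest common prefix and suffix leaves two nonempty paths,
  the core of the pair, and adding a common context on both sides does not change it. The
  differential of Bardzell's complex only ever multiplies \<open>(p||b)\<close> by such a common context
  (this needs that \<open>\<sigma>\<close> and \<open>\<pi>\<close> are well defined, i.e.\ that left and right ambiguities have unique
  decompositions and coincide), so it respects the partition of the terms of a cochain by
  their core. Hence the terms of a cocycle with a given core form a cocycle of their own, so an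
  irreducible cocycle has a single core, and its two components are the paths \<open>pt\<close> and \<open>bt\<close>.\<close>

hide_const (open) Sublist.parallel
hide_fact (open) Sublist.parallel_def

section \<open>Stripping the common prefix and suffix of two lists\<close>

lemma longest_common_prefix_append_left:
  "longest_common_prefix (zs @ xs) (zs @ ys) = zs @ longest_common_prefix xs ys"
  by (induction zs) auto

lemma longest_common_prefix_append_right:
  "xs \<parallel> ys \<Longrightarrow> longest_common_prefix (xs @ us) (ys @ vs) = longest_common_prefix xs ys"
  by (induction xs ys rule: longest_common_prefix.induct) (auto dest: parallel_cancel)

definition drop_common_prefix :: "'a list \<Rightarrow> 'a list \<Rightarrow> 'a list \<times> 'a list" where
  "drop_common_prefix xs ys =
     (drop (length (longest_common_prefix xs ys)) xs, drop (length (longest_common_prefix xs ys)) ys)"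

definition drop_common_suffix :: "'a list \<Rightarrow> 'a list \<Rightarrow> 'a list \<times> 'a list" where
  "drop_common_suffix xs ys = map_prod rev rev (drop_common_prefix (rev xs) (rev ys))"

definition strip_common_affixes :: "'a list \<Rightarrow> 'a list \<Rightarrow> 'a list \<times> 'a list" where
  "strip_common_affixes xs ys =
     drop_common_suffix (fst (drop_common_prefix xs ys)) (snd (drop_common_prefix xs ys))"

lemma prefix_append_drop: "prefix zs xs \<Longrightarrow> xs = zs @ drop (length zs) xs"
  by (auto simp: prefix_def)

lemma drop_common_prefix_decomp:
  obtains zs where "xs = zs @ fst (drop_common_prefix xs ys)" "ys = zs @ snd (drop_common_prefix xs ys)"
proof
  let ?zs = "longest_common_prefix xs ys"
  show "xs = ?zs @ fst (drop_common_prefix xs ys)" "ys = ?zs @ snd (drop_common_prefix xs ys)"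
    using prefix_append_drop[OF longest_common_prefix_prefix1[of xs ys]]
      prefix_append_drop[OF longest_common_prefix_prefix2[of xs ys]]
    by (simp_all add: drop_common_prefix_def)
qed

lemma drop_common_prefix_context:
  assumes "xs \<parallel> ys"
  shows "drop_common_prefix (zs @ xs @ us) (zs @ ys @ vs)
    = (fst (drop_common_prefix xs ys) @ us, snd (drop_common_prefix xs ys) @ vs)"
proof -
  let ?l = "length (longest_common_prefix xs ys)"
  have "?l \<le> length xs" "?l \<le> length ys"
    using prefix_length_le longest_common_prefix_prefix1 longest_common_prefix_prefix2 by blast+
  then show ?thesis
    using longest_common_prefix_append_left[of zs "xs @ us" "ys @ vs"]
      longest_common_prefix_append_right[OF assms]
    by (simp add: drop_common_prefix_def)
qed

lemma drop_common_suffix_decomp: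
  obtains us where "xs = fst (drop_common_suffix xs ys) @ us" "ys = snd (drop_common_suffix xs ys) @ us"
proof -
  obtain zs where "rev xs = zs @ fst (drop_common_prefix (rev xs) (rev ys))"
    "rev ys = zs @ snd (drop_common_prefix (rev xs) (rev ys))"
    by (rule drop_common_prefix_decomp)
  then have "xs = fst (drop_common_suffix xs ys) @ rev zs" "ys = snd (drop_common_suffix xs ys) @ rev zs"
    unfolding drop_common_suffix_def by (metis fst_map_prod snd_map_prod rev_append rev_rev_ident)+
  then show ?thesis by (rule that)
qed

lemma drop_common_suffix_context:
  assumes "rev xs \<parallel> rev ys"
  shows "drop_common_suffix (xs @ us) (ys @ us) = drop_common_suffix xs ys"
  using drop_common_prefix_context[OF assms, of "rev us" "[]" "[]"]
  by (simp add: drop_common_suffix_def)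

lemma drop_common_suffix_nonempty:
  assumes "rev xs \<parallel> rev ys"
  shows "fst (drop_common_suffix xs ys) \<noteq> [] \<and> snd (drop_common_suffix xs ys) \<noteq> []"
proof -
  obtain us where "xs = fst (drop_common_suffix xs ys) @ us" "ys = snd (drop_common_suffix xs ys) @ us"
    by (rule drop_common_suffix_decomp)
  with assms show ?thesis by (metis append_Nil prefix_def rev_append parallelD1 parallelD2)
qed

definition separated :: "'a list \<Rightarrow> 'a list \<Rightarrow> bool" where
  "separated xs ys \<longleftrightarrow>
     (\<forall>zs xs' ys'. xs = zs @ xs' \<longrightarrow> ys = zs @ ys' \<longrightarrow> xs' \<parallel> ys' \<and> rev xs' \<parallel> rev ys')"

lemma strip_common_affixes_decomp:
  obtains zs us where "xs = zs @ fst (strip_common_affixes xs ys) @ us"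
    "ys = zs @ snd (strip_common_affixes xs ys) @ us"
proof -
  obtain zs where zs: "xs = zs @ fst (drop_common_prefix xs ys)" "ys = zs @ snd (drop_common_prefix xs ys)"
    by (rule drop_common_prefix_decomp)
  obtain us where "fst (drop_common_prefix xs ys) = fst (strip_common_affixes xs ys) @ us"
    "snd (drop_common_prefix xs ys) = snd (strip_common_affixes xs ys) @ us"
    unfolding strip_common_affixes_def by (rule drop_common_suffix_decomp)
  with zs show ?thesis using that by simp
qed

lemma strip_common_affixes_nonempty:
  assumes "separated xs ys"
  shows "fst (strip_common_affixes xs ys) \<noteq> [] \<and> snd (strip_common_affixes xs ys) \<noteq> []"
proof -
  obtain zs where "xs = zs @ fst (drop_common_prefix xs ys)" "ys = zs @ snd (drop_common_prefix xs ys)"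
    by (rule drop_common_prefix_decomp)
  with assms show ?thesis
    unfolding separated_def strip_common_affixes_def by (metis drop_common_suffix_nonempty)
qed

lemma strip_common_affixes_context:
  assumes "separated xs ys"
  shows "strip_common_affixes (zs @ xs @ us) (zs @ ys @ us) = strip_common_affixes xs ys"
proof -
  obtain ws where ws: "xs = ws @ fst (drop_common_prefix xs ys)" "ys = ws @ snd (drop_common_prefix xs ys)"
    by (rule drop_common_prefix_decomp)
  have "xs \<parallel> ys" using assms[unfolded separated_def, rule_format, of "[]"] by simp
  moreover have "rev (fst (drop_common_prefix xs ys)) \<parallel> rev (snd (drop_common_prefix xs ys))"
    using assms ws unfolding separated_def by blast
  ultimately show ?thesis
    by (simp add: strip_common_affixes_def drop_common_prefix_context drop_common_suffix_context)
qed

section \<open>Cut positions\<close>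

text \<open>\<open>reducible i j\<close> says that the slice \<open>[i, j)\<close> of the arrow list of a path contains a
  relation. A left \<open>m\<close>-ambiguity of length \<open>L\<close> is described by the positions \<open>A j\<close> at which
  its factors \<open>u\<^sub>m, \<dots>, u\<^sub>0\<close> start (in order of traversal), a right one by the positions \<open>S j\<close>
  at which \<open>v\<^sub>0, \<dots>, v\<^sub>m\<close> start.\<close>
locale reducible_segments =
  fixes reducible :: "nat \<Rightarrow> nat \<Rightarrow> bool"
  assumes reducible_mono: "i \<le> i' \<Longrightarrow> j' \<le> j \<Longrightarrow> reducible i' j' \<Longrightarrow> reducible i j"
    and reducible_length: "reducible i j \<Longrightarrow> i + 2 \<le> j"
begin

definition left_cuts :: "nat \<Rightarrow> nat \<Rightarrow> (nat \<Rightarrow> nat) \<Rightarrow> bool" where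
  "left_cuts m L A \<longleftrightarrow> A 0 = 0 \<and> Suc (A m) = L \<and> A (Suc m) = L
     \<and> (\<forall>i<m. \<not> reducible (A i) (A (Suc i)))
     \<and> (\<forall>i<m. reducible (A i) (A (Suc (Suc i))) \<and> \<not> reducible (Suc (A i)) (A (Suc (Suc i))))"

definition right_cuts :: "nat \<Rightarrow> nat \<Rightarrow> (nat \<Rightarrow> nat) \<Rightarrow> bool" where
  "right_cuts m L S \<longleftrightarrow> S 0 = 0 \<and> S 1 = 1 \<and> S (Suc m) = L
     \<and> (\<forall>i. 1 \<le> i \<and> i \<le> m \<longrightarrow> \<not> reducible (S i) (S (Suc i)))
     \<and> (\<forall>i<m. reducible (S i) (S (Suc (Suc i))) \<and> \<not> reducible (S i) (S (Suc (Suc i)) - 1))"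

fun greedy_cut :: "nat \<Rightarrow> nat" where
  "greedy_cut 0 = 0"
| "greedy_cut (Suc 0) = 1"
| "greedy_cut (Suc (Suc k)) = (LEAST e. reducible (greedy_cut k) e)"

lemma left_cuts_strict_mono:
  assumes A: "left_cuts m L A" and "i \<le> m"
  shows "A i < A (Suc i)"
proof (cases "i < m")
  case True
  show ?thesis
  proof (rule ccontr)
    assume "\<not> A i < A (Suc i)"
    then have "A (Suc i) \<le> A i" by simp
    moreover have "reducible (A i) (A (Suc (Suc i)))" using A True by (simp add: left_cuts_def)
    ultimately have red: "reducible (A (Suc i)) (A (Suc (Suc i)))" using reducible_mono by blast
    show False
    proof (cases "Suc i < m")
      case True then show False using A red by (simp add: left_cuts_def)
    next
      case False
      then have "m = Suc i" using \<open>i < m\<close> by simp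
      then have "A (Suc (Suc i)) = Suc (A (Suc i))" using A by (simp add: left_cuts_def)
      then show False using reducible_length[OF red] by simp
    qed
  qed
next
  case False
  then show ?thesis using A \<open>i \<le> m\<close> by (simp add: left_cuts_def)
qed

lemma greedy_cut_between:
  assumes A: "left_cuts m L A" and "j \<le> m"
  shows "A j < greedy_cut (Suc j) \<and> greedy_cut (Suc j) \<le> A (Suc j)"
  using \<open>j \<le> m\<close>
proof (induction j rule: less_induct)
  case (less j)
  show ?case
  proof (cases j)
    case 0
    then show ?thesis using A left_cuts_strict_mono[OF A, of 0] by (simp add: left_cuts_def)
  next
    case (Suc i)
    have "i < m" using less.prems Suc by simp
    have le: "greedy_cut i \<le> A i"
      using A less.IH[of "i - 1"] \<open>j = Suc i\<close> less.prems
      by (cases i) (simp_all add: left_cuts_def)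
    have "reducible (A i) (A (Suc j))" using A \<open>i < m\<close> Suc by (simp add: left_cuts_def)
    then have red: "reducible (greedy_cut i) (A (Suc j))" using reducible_mono[OF le order_refl] by blast
    have irred: "\<not> reducible (greedy_cut i) (A j)"
    proof (cases i)
      case 0
      then show ?thesis using A \<open>i < m\<close> Suc unfolding left_cuts_def by (metis greedy_cut.simps(1))
    next
      case (Suc h)
      have "Suc (A h) \<le> greedy_cut i" using less.IH[of h] \<open>j = Suc i\<close> Suc less.prems by simp
      moreover have "\<not> reducible (Suc (A h)) (A (Suc i))"
        using A \<open>i < m\<close> Suc by (simp add: left_cuts_def)
      ultimately show ?thesis using reducible_mono \<open>j = Suc i\<close> by blast
    qed
    have g: "greedy_cut (Suc j) = (LEAST e. reducible (greedy_cut i) e)" using Suc by simp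
    have "reducible (greedy_cut i) (greedy_cut (Suc j))"
      unfolding g by (rule LeastI[of "reducible (greedy_cut i)", OF red])
    then have "A j < greedy_cut (Suc j)" using irred reducible_mono not_le by blast
    moreover have "greedy_cut (Suc j) \<le> A (Suc j)"
      unfolding g by (rule Least_le[of "reducible (greedy_cut i)", OF red])
    ultimately show ?thesis by simp
  qed
qed

lemma greedy_cut_le:
  assumes A: "left_cuts m L A" and "j \<le> m"
  shows "greedy_cut j \<le> A j"
  using assms greedy_cut_between[OF A, of "j - 1"] by (cases j) (simp_all add: left_cuts_def)

lemma right_cuts_greedy:
  assumes A: "left_cuts m L A"
  shows "right_cuts m L greedy_cut"
proof -
  have irred: "\<not> reducible (greedy_cut i) (greedy_cut (Suc i))" if "1 \<le> i" "i \<le> m" for i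
  proof -
    obtain h where i: "i = Suc h" using \<open>1 \<le> i\<close> not0_implies_Suc by force
    have "Suc (A h) \<le> greedy_cut i" using greedy_cut_between[OF A, of h] \<open>i \<le> m\<close> i by simp
    moreover have "greedy_cut (Suc i) \<le> A (Suc i)" using greedy_cut_between[OF A, of i] \<open>i \<le> m\<close> by simp
    moreover have "\<not> reducible (Suc (A h)) (A (Suc i))" using A \<open>i \<le> m\<close> i by (simp add: left_cuts_def)
    ultimately show ?thesis using reducible_mono by blast
  qed
  have minimal: "reducible (greedy_cut i) (greedy_cut (Suc (Suc i)))
      \<and> \<not> reducible (greedy_cut i) (greedy_cut (Suc (Suc i)) - 1)" if "i < m" for i
  proof -
    have "greedy_cut i \<le> A i" using greedy_cut_le[OF A, of i] that by simp
    moreover have "reducible (A i) (A (Suc (Suc i)))" using A that by (simp add: left_cuts_def)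
    ultimately have red: "reducible (greedy_cut i) (A (Suc (Suc i)))" using reducible_mono by blast
    have "0 < greedy_cut (Suc (Suc i))" using greedy_cut_between[OF A, of "Suc i"] that by simp
    then have "greedy_cut (Suc (Suc i)) - 1 < (LEAST e. reducible (greedy_cut i) e)" by simp
    then show ?thesis using LeastI[of "reducible (greedy_cut i)", OF red] not_less_Least by simp
  qed
  have "greedy_cut (Suc m) = L" using greedy_cut_between[OF A, of m] A by (simp add: left_cuts_def)
  then show "right_cuts m L greedy_cut" unfolding right_cuts_def using irred minimal by simp
qed

lemma greedy_cut_mono:
  assumes A: "left_cuts m L A" and "i \<le> j" "j \<le> Suc m"
  shows "greedy_cut i \<le> greedy_cut j"
proof (rule lift_Suc_mono_le_ivl[of "{..m}" greedy_cut])
  show "greedy_cut l \<le> greedy_cut (Suc l)" if "l \<in> {..m}" for l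
    using greedy_cut_le[OF A, of l] greedy_cut_between[OF A, of l] that by simp
qed (use assms in auto)

lemma reducible_end_unique:
  assumes "reducible i e" "\<not> reducible i (e - 1)" "reducible i e'" "\<not> reducible i (e' - 1)"
  shows "e = e'"
proof (rule ccontr)
  assume "e \<noteq> e'"
  then have "e \<le> e' - 1 \<or> e' \<le> e - 1" by linarith
  then show False using assms reducible_mono[OF order_refl] by blast
qed

lemma reducible_start_unique:
  assumes "reducible s e" "\<not> reducible (Suc s) e" "reducible s' e" "\<not> reducible (Suc s') e"
  shows "s = s'"
proof (rule ccontr)
  assume "s \<noteq> s'"
  then have "Suc s \<le> s' \<or> Suc s' \<le> s" by linarith
  then show False using assms reducible_mono[OF _ order_refl] by blast
qed

lemma right_cuts_unique:
  assumes S: "right_cuts m L S" and S': "right_cuts m L S'" and "j \<le> Suc m"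
  shows "S j = S' j"
  using \<open>j \<le> Suc m\<close>
proof (induction j rule: less_induct)
  case (less j)
  show ?case
  proof (cases "j \<le> 1")
    case True
    then show ?thesis using S S' by (auto simp: right_cuts_def le_Suc_eq)
  next
    case False
    define i where "i = j - 2"
    have j: "j = Suc (Suc i)" and "i < m" using False less.prems by (simp_all add: i_def)
    then have "S i = S' i" using less by simp
    have "reducible (S i) (S j)" "\<not> reducible (S i) (S j - 1)"
      using S \<open>i < m\<close> by (simp_all add: right_cuts_def j)
    moreover have "reducible (S i) (S' j)" "\<not> reducible (S i) (S' j - 1)"
      using S' \<open>i < m\<close> \<open>S i = S' i\<close> by (simp_all add: right_cuts_def j)
    ultimately show ?thesis by (rule reducible_end_unique)
  qed
qed

lemma left_cuts_unique:
  assumes A: "left_cuts m L A" and A': "left_cuts m L A'" and "j \<le> Suc m"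
  shows "A j = A' j"
proof -
  have "A (Suc m - d) = A' (Suc m - d)" if "d \<le> Suc m" for d
    using that
  proof (induction d rule: less_induct)
    case (less d)
    show ?case
    proof (cases "d \<le> 1")
      case True
      then show ?thesis using A A' by (auto simp: left_cuts_def le_Suc_eq)
    next
      case False
      define i where "i = Suc m - d"
      have "i < m" "Suc (Suc i) = Suc m - (d - 2)" using less.prems False by (simp_all add: i_def)
      moreover have "d - 2 < d" using False by simp
      ultimately have "A (Suc (Suc i)) = A' (Suc (Suc i))" using less.IH[of "d - 2"] less.prems by simp
      have "reducible (A i) (A (Suc (Suc i)))" "\<not> reducible (Suc (A i)) (A (Suc (Suc i)))"
        using A \<open>i < m\<close> by (simp_all add: left_cuts_def)
      moreover have "reducible (A' i) (A (Suc (Suc i)))" "\<not> reducible (Suc (A' i)) (A (Suc (Suc i)))"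
        using A' \<open>i < m\<close> \<open>A (Suc (Suc i)) = A' (Suc (Suc i))\<close> by (simp_all add: left_cuts_def)
      ultimately show ?thesis unfolding i_def[symmetric] by (rule reducible_start_unique)
    qed
  qed
  from this[of "Suc m - j"] show ?thesis using \<open>j \<le> Suc m\<close> by simp
qed

end

abbreviation slice :: "nat \<Rightarrow> nat \<Rightarrow> 'a list \<Rightarrow> 'a list" where
  "slice i j xs \<equiv> drop i (take j xs)"

lemma slice_append:
  assumes "i \<le> j" "j \<le> k" "k \<le> length xs"
  shows "slice i j xs @ slice j k xs = slice i k xs"
proof -
  have "take k xs = take j xs @ slice j k xs"
    by (metis append_take_drop_id min.absorb1 take_take assms(2))
  then have "slice i k xs = drop i (take j xs @ slice j k xs)" by simp
  also have "\<dots> = slice i j xs @ slice j k xs" using assms by simp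
  finally show ?thesis by simp
qed

lemma sublist_slice:
  assumes "i \<le> i'" "j' \<le> j"
  shows "sublist (slice i' j' xs) (slice i j xs)"
proof -
  have "slice i' j' xs = take (j' - i') (drop (i' - i) (slice i j xs))"
    using assms by (simp add: drop_take min_def)
  then show ?thesis by (metis sublist_order.order_trans sublist_drop sublist_take)
qed

definition offset :: "'a list list \<Rightarrow> nat \<Rightarrow> nat" where
  "offset xss i = length (concat (take i xss))"

lemma offset_0 [simp]: "offset xss 0 = 0"
  by (simp add: offset_def)

lemma offset_Suc: "i < length xss \<Longrightarrow> offset xss (Suc i) = offset xss i + length (xss ! i)"
  by (simp add: offset_def take_Suc_conv_app_nth)

lemma offset_length: "offset xss (length xss) = length (concat xss)"
  by (simp add: offset_def)

lemma offset_le_length: "offset xss i \<le> length (concat xss)"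
  unfolding offset_def by (metis append_take_drop_id concat_append length_append le_add1)

lemma offset_mono: "i \<le> j \<Longrightarrow> offset xss i \<le> offset xss j"
  unfolding offset_def by (metis concat_append le_add1 le_add_diff_inverse length_append take_add)

lemma nth_eq_slice_concat:
  assumes "i < length xss"
  shows "xss ! i = slice (offset xss i) (offset xss (Suc i)) (concat xss)"
proof -
  have "take (offset xss j) (concat xss) = concat (take j xss)" for j
    unfolding offset_def by (metis append_eq_conv_conj append_take_drop_id concat_append)
  from this[of "Suc i"] have "take (offset xss (Suc i)) (concat xss) = concat (take i xss) @ xss ! i"
    using assms by (simp add: take_Suc_conv_app_nth)
  then show ?thesis by (simp add: offset_def)
qed

lemma concat_slices:
  assumes "i \<le> j" "mono_on {i..j} S" "S j \<le> length xs"
  shows "concat (map (\<lambda>l. slice (S l) (S (Suc l)) xs) [i..<j]) = slice (S i) (S j) xs"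
  using assms
proof (induction j)
  case (Suc j)
  show ?case
  proof (cases "i = Suc j")
    case False
    then have "i \<le> j" using Suc.prems by simp
    have "mono_on {i..j} S" using Suc.prems(2) by (rule mono_on_subset) auto
    moreover have "S i \<le> S j" "S j \<le> S (Suc j)" using Suc.prems(2) \<open>i \<le> j\<close> by (simp_all add: mono_on_def)
    ultimately show ?thesis using Suc \<open>i \<le> j\<close> slice_append[of "S i" "S j" "S (Suc j)" xs] by simp
  qed simp
qed simp

section \<open>Paths in a triangular quiver with monomial relations\<close>

lemma ptgt_Nil [simp]: "ptgt Q (v, []) = v"
  by (simp add: ptgt_def)

lemma ptgt_Cons [simp]: "ptgt Q (v, x # xs) = ptgt Q (tgt_of Q x, xs)"
  by (simp add: ptgt_def)

lemma ptgt_append: "ptgt Q (v, xs @ ys) = ptgt Q (ptgt Q (v, xs), ys)"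
  by (induction xs arbitrary: v) auto

lemma pcat_sel [simp]: "fst (pcat q p) = fst p" "snd (pcat q p) = snd p @ snd q"
  by (simp_all add: pcat_def)

lemma ptgt_pcat: "composable Q c p \<Longrightarrow> ptgt Q (pcat c p) = ptgt Q c"
  by (simp add: pcat_def ptgt_append composable_def psrc_def)

lemma path_src_hd: "is_path Q p \<Longrightarrow> snd p \<noteq> [] \<Longrightarrow> fst p = src_of Q (hd (snd p))"
  by (simp add: is_path_def)

lemma chain_Cons:
  "(\<forall>i. Suc i < length (x # xs) \<longrightarrow> tgt_of Q ((x # xs) ! i) = src_of Q ((x # xs) ! Suc i)) \<longleftrightarrow>
   (xs \<noteq> [] \<longrightarrow> tgt_of Q x = src_of Q (hd xs))
   \<and> (\<forall>i. Suc i < length xs \<longrightarrow> tgt_of Q (xs ! i) = src_of Q (xs ! Suc i))"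
  by (auto simp: hd_conv_nth nth_Cons split: nat.split)

lemma rprod_Cons: "ws \<noteq> [] \<Longrightarrow> rprod (w # ws) = pcat (rprod ws) w"
  by (simp add: rprod_def pcat_def psrc_def)

lemma lprod_rev: "ws \<noteq> [] \<Longrightarrow> lprod (rev ws) = rprod ws"
  by (simp add: lprod_def rprod_def last_rev rev_map[symmetric] rev_concat[symmetric])

lemma pre_of_eq: "is_path Q a \<Longrightarrow> composable Q q a \<Longrightarrow> p = pcat q a \<Longrightarrow> pre_of Q p q = a"
  unfolding pre_of_def by (rule the_equality) (auto simp: pcat_def prod_eq_iff)

lemma suf_of_eq: "is_path Q c \<Longrightarrow> composable Q c q \<Longrightarrow> p = pcat c q \<Longrightarrow> suf_of Q p q = c"
  unfolding suf_of_def by (rule the_equality) (auto simp: pcat_def prod_eq_iff composable_def psrc_def)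

locale triangular_monomial =
  fixes Q :: "('v, 'e) quiver" and R :: "('v, 'e) path set"
  assumes arrow_ends: "\<forall>e\<in>arrs Q. src_of Q e \<in> verts Q \<and> tgt_of Q e \<in> verts Q"
    and monomial: "monomial_rels Q R"
    and triangular: "triangular Q"
begin

lemma is_path_Nil [simp]: "is_path Q (v, []) \<longleftrightarrow> v \<in> verts Q"
  by (simp add: is_path_def)

lemma is_path_Cons:
  "is_path Q (v, x # xs) \<longleftrightarrow> x \<in> arrs Q \<and> src_of Q x = v \<and> is_path Q (tgt_of Q x, xs)"
  unfolding is_path_def prod.sel chain_Cons using arrow_ends by auto

lemma is_path_append:
  "is_path Q (v, xs @ ys) \<longleftrightarrow> is_path Q (v, xs) \<and> is_path Q (ptgt Q (v, xs), ys)"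
proof (induction xs arbitrary: v)
  case Nil
  then show ?case using arrow_ends by (cases ys) (auto simp: is_path_Cons)
qed (auto simp: is_path_Cons)

lemma is_path_pcat: "composable Q c p \<Longrightarrow> is_path Q (pcat c p) \<longleftrightarrow> is_path Q p \<and> is_path Q c"
  by (cases p) (simp add: pcat_def is_path_append composable_def psrc_def)

lemma relation_path: "r \<in> R \<Longrightarrow> is_path Q r \<and> 2 \<le> length (snd r)"
  using monomial by (simp add: monomial_rels_def)

lemma divisor_iff_sublist:
  assumes p: "is_path Q p" and r: "is_path Q r" "snd r \<noteq> []"
  shows "divisor Q r p \<longleftrightarrow> sublist (snd r) (snd p)"
proof
  assume "divisor Q r p"
  then show "sublist (snd r) (snd p)" by (auto simp: divisor_def occ_def)
next
  assume "sublist (snd r) (snd p)"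
  then obtain xs ys where e: "snd p = xs @ snd r @ ys" by (auto simp: sublist_def)
  define a where "a = (fst p, xs)"
  define c where "c = (ptgt Q r, ys)"
  have "is_path Q (fst p, xs @ snd r @ ys)" using p e by (metis prod.collapse)
  then have a: "is_path Q a" and "is_path Q (ptgt Q a, snd r @ ys)"
    by (simp_all add: is_path_append a_def)
  then have r': "is_path Q (ptgt Q a, snd r)" and "is_path Q (ptgt Q (ptgt Q a, snd r), ys)"
    by (simp_all add: is_path_append)
  moreover have "ptgt Q a = fst r" using path_src_hd[OF r'] path_src_hd[OF r(1)] r(2) by simp
  ultimately have "is_path Q c" by (simp add: c_def)
  then have "occ Q r p c a"
    using a r(1) \<open>ptgt Q a = fst r\<close>
    by (auto simp: occ_def composable_def psrc_def c_def a_def pcat_def e prod_eq_iff)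
  then show "divisor Q r p" unfolding divisor_def by blast
qed

lemma inI_iff:
  assumes "is_path Q p"
  shows "inI Q R p \<longleftrightarrow> (\<exists>r\<in>R. sublist (snd r) (snd p))"
proof -
  have "divisor Q r p \<longleftrightarrow> sublist (snd r) (snd p)" if "r \<in> R" for r
    using relation_path[OF that] by (intro divisor_iff_sublist[OF assms]) auto
  then show ?thesis using assms by (auto simp: inI_def)
qed

lemma basis_iff: "p \<in> basis Q R \<longleftrightarrow> is_path Q p \<and> \<not> (\<exists>r\<in>R. sublist (snd r) (snd p))"
  unfolding basis_def using inI_iff[of p] by auto

lemma basis_sublist: "p \<in> basis Q R \<Longrightarrow> is_path Q p' \<Longrightarrow> sublist (snd p') (snd p) \<Longrightarrow> p' \<in> basis Q R"
  unfolding basis_iff using sublist_order.order_trans by blast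

lemma no_cycle: "is_path Q (v, xs) \<Longrightarrow> ptgt Q (v, xs) = v \<Longrightarrow> xs = []"
  using triangular unfolding triangular_def by (auto simp: psrc_def)

lemma acyclic_prefix:
  "is_path Q (v, xs @ ys) \<Longrightarrow> ptgt Q (v, xs @ ys) = ptgt Q (v, xs) \<Longrightarrow> ys = []"
  using no_cycle[of "ptgt Q (v, xs)" ys] by (simp add: is_path_append ptgt_append)

lemma acyclic_suffix:
  assumes "is_path Q (v, xs @ ys)" "is_path Q (v, ys)" "ptgt Q (v, xs @ ys) = ptgt Q (v, ys)"
  shows "xs = []"
proof (cases "ys = []")
  case True
  then show ?thesis using assms no_cycle by simp
next
  case False
  have "is_path Q (v, xs)" "is_path Q (ptgt Q (v, xs), ys)" using assms(1) by (simp_all add: is_path_append)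
  moreover have "ptgt Q (v, xs) = v"
    using path_src_hd[OF \<open>is_path Q (ptgt Q (v, xs), ys)\<close>] path_src_hd[OF assms(2)] False by simp
  ultimately show ?thesis using no_cycle by blast
qed

text \<open>The difference of two comparable parallel paths would be an oriented cycle.\<close>
lemma parallel_paths_incomparable:
  assumes "is_path Q (v, xs)" "is_path Q (v, ys)" "ptgt Q (v, xs) = ptgt Q (v, ys)" "xs \<noteq> ys"
  shows "xs \<parallel> ys \<and> rev xs \<parallel> rev ys"
proof -
  have not_prefix: "\<not> prefix xs ys"
    if "is_path Q (v, ys)" "ptgt Q (v, xs) = ptgt Q (v, ys)" "xs \<noteq> ys" for xs ys
  proof
    assume "prefix xs ys"
    then obtain zs where "ys = xs @ zs" by (auto simp: prefix_def)
    then show False using that acyclic_prefix[of v xs zs] by simp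
  qed
  have not_suffix: "\<not> suffix xs ys"
    if "is_path Q (v, xs)" "is_path Q (v, ys)" "ptgt Q (v, xs) = ptgt Q (v, ys)" "xs \<noteq> ys" for xs ys
  proof
    assume "suffix xs ys"
    then obtain zs where "ys = zs @ xs" by (auto simp: suffix_def)
    then show False using that acyclic_suffix[of v zs xs] by simp
  qed
  show ?thesis
    using assms not_prefix[of ys xs] not_prefix[of xs ys] not_suffix[of ys xs] not_suffix[of xs ys]
    by (auto simp: suffix_to_prefix)
qed

lemma separated_parallel_paths:
  assumes "is_path Q p" "is_path Q b" "parallel Q p b" "p \<noteq> b"
  shows "separated (snd p) (snd b)"
  unfolding separated_def
proof (intro allI impI)
  fix zs xs ys assume e: "snd p = zs @ xs" "snd b = zs @ ys"
  obtain v where p: "p = (v, zs @ xs)" and b: "b = (v, zs @ ys)"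
    using e \<open>parallel Q p b\<close> by (metis parallel_def psrc_def prod.collapse)
  let ?w = "ptgt Q (v, zs)"
  show "xs \<parallel> ys \<and> rev xs \<parallel> rev ys"
  proof (rule parallel_paths_incomparable)
    show "is_path Q (?w, xs)" "is_path Q (?w, ys)" using assms(1,2) p b by (simp_all add: is_path_append)
    show "ptgt Q (?w, xs) = ptgt Q (?w, ys)"
      using \<open>parallel Q p b\<close> p b by (simp add: parallel_def ptgt_append)
    show "xs \<noteq> ys" using \<open>p \<noteq> b\<close> p b by simp
  qed
qed

definition vertex_at :: "('v, 'e) path \<Rightarrow> nat \<Rightarrow> 'v" where
  "vertex_at q i = ptgt Q (fst q, take i (snd q))"

definition segment :: "('v, 'e) path \<Rightarrow> nat \<Rightarrow> nat \<Rightarrow> ('v, 'e) path" where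
  "segment q i j = (vertex_at q i, slice i j (snd q))"

definition reducible_in :: "('v, 'e) path \<Rightarrow> nat \<Rightarrow> nat \<Rightarrow> bool" where
  "reducible_in q i j \<longleftrightarrow> (\<exists>r\<in>R. sublist (snd r) (slice i j (snd q)))"

lemma segment_path:
  assumes q: "is_path Q q" and "i \<le> j" "j \<le> length (snd q)"
  shows "is_path Q (segment q i j)" "ptgt Q (segment q i j) = vertex_at q j"
proof -
  obtain v w where qv: "q = (v, w)" by (cases q)
  have e: "take j w = take i w @ slice i j w" using \<open>i \<le> j\<close> by (metis append_take_drop_id min.absorb1 take_take)
  have "is_path Q (v, take j w)" using q qv is_path_append[of v "take j w" "drop j w"] by simp
  then have "is_path Q (v, take i w @ slice i j w)" unfolding e[symmetric] .
  then show "is_path Q (segment q i j)"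
    unfolding is_path_append by (simp add: segment_def vertex_at_def qv)
  have "ptgt Q (v, take j w) = ptgt Q (ptgt Q (v, take i w), slice i j w)"
    unfolding ptgt_append[symmetric] e[symmetric] ..
  then show "ptgt Q (segment q i j) = vertex_at q j"
    by (simp add: segment_def vertex_at_def qv)
qed

lemma segment_whole: "segment q 0 (length (snd q)) = q"
  by (simp add: segment_def vertex_at_def)

lemma pcat_segments:
  "i \<le> j \<Longrightarrow> j \<le> k \<Longrightarrow> k \<le> length (snd q) \<Longrightarrow> pcat (segment q j k) (segment q i j) = segment q i k"
  by (simp add: pcat_def segment_def slice_append)

lemma composable_segments:
  "is_path Q q \<Longrightarrow> i \<le> j \<Longrightarrow> j \<le> length (snd q) \<Longrightarrow> composable Q (segment q j k) (segment q i j)"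
  using segment_path by (simp add: composable_def psrc_def segment_def)

lemma reducible_segments_reducible_in: "reducible_segments (reducible_in q)"
proof
  fix i i' j j' assume "i \<le> i'" "j' \<le> j" "reducible_in q i' j'"
  then show "reducible_in q i j"
    unfolding reducible_in_def using sublist_slice sublist_order.order_trans by blast
next
  fix i j assume "reducible_in q i j"
  then obtain r where "r \<in> R" "sublist (snd r) (slice i j (snd q))" by (auto simp: reducible_in_def)
  then have "2 \<le> length (slice i j (snd q))" using relation_path sublist_length_le by fastforce
  then show "i + 2 \<le> j" by simp
qed

lemma segment_inI_iff:
  "is_path Q q \<Longrightarrow> i \<le> j \<Longrightarrow> j \<le> length (snd q) \<Longrightarrow> inI Q R (segment q i j) \<longleftrightarrow> reducible_in q i j"
  using inI_iff segment_path by (simp add: reducible_in_def segment_def)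

lemma segment_basis_iff:
  "is_path Q q \<Longrightarrow> i \<le> j \<Longrightarrow> j \<le> length (snd q) \<Longrightarrow> segment q i j \<in> basis Q R \<longleftrightarrow> \<not> reducible_in q i j"
  using segment_inI_iff segment_path by (simp add: basis_def)

definition path_chain :: "('v, 'e) path list \<Rightarrow> bool" where
  "path_chain ws \<longleftrightarrow> (\<forall>i<length ws. is_path Q (ws ! i))
     \<and> (\<forall>i. Suc i < length ws \<longrightarrow> composable Q (ws ! Suc i) (ws ! i))"

lemma path_chain_rprod:
  "ws \<noteq> [] \<Longrightarrow> path_chain ws \<Longrightarrow> is_path Q (rprod ws) \<and> ptgt Q (rprod ws) = ptgt Q (last ws)"
proof (induction ws)
  case (Cons w ws)
  show ?case
  proof (cases "ws = []")
    case True
    then show ?thesis using Cons.prems by (simp add: rprod_def path_chain_def psrc_def)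
  next
    case False
    have "path_chain ws" using Cons.prems(2) unfolding path_chain_def by fastforce
    then have IH: "is_path Q (rprod ws) \<and> ptgt Q (rprod ws) = ptgt Q (last ws)"
      using Cons.IH False by blast
    have "composable Q (ws ! 0) w" "is_path Q w"
      using Cons.prems(2) False unfolding path_chain_def by fastforce+
    then have "composable Q (rprod ws) w"
      using False by (simp add: composable_def hd_conv_nth rprod_def psrc_def)
    then show ?thesis using IH \<open>is_path Q w\<close> False
      by (simp add: rprod_Cons is_path_pcat ptgt_pcat)
  qed
qed simp

lemma path_chain_nth_segment:
  assumes "ws \<noteq> []" "path_chain ws" "j < length ws"
  shows "ws ! j = segment (rprod ws) (offset (map snd ws) j) (offset (map snd ws) (Suc j))"
proof -
  let ?S = "offset (map snd ws)"
  have snd_eq: "snd (ws ! j) = snd (segment (rprod ws) (?S j) (?S (Suc j)))" if "j < length ws" for j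
    using nth_eq_slice_concat[of j "map snd ws"] that by (simp add: segment_def rprod_def)
  show ?thesis
    using \<open>j < length ws\<close>
  proof (induction j)
    case 0
    then show ?case using snd_eq[of 0] assms(1)
      by (simp add: prod_eq_iff segment_def vertex_at_def rprod_def psrc_def hd_conv_nth)
  next
    case (Suc j)
    have "fst (ws ! Suc j) = ptgt Q (ws ! j)"
      using assms(2) Suc.prems by (simp add: path_chain_def composable_def psrc_def)
    also have "\<dots> = vertex_at (rprod ws) (?S (Suc j))"
      using Suc segment_path(2)[OF conjunct1[OF path_chain_rprod[OF assms(1,2)]]]
        offset_mono[of j "Suc j" "map snd ws"] offset_le_length[of "map snd ws" "Suc j"]
      by (simp add: rprod_def)
    finally show ?case using snd_eq[OF Suc.prems] by (simp add: prod_eq_iff segment_def)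
  qed
qed

definition segments :: "('v, 'e) path \<Rightarrow> (nat \<Rightarrow> nat) \<Rightarrow> nat \<Rightarrow> nat \<Rightarrow> ('v, 'e) path list" where
  "segments q S i j = map (\<lambda>l. segment q (S l) (S (Suc l))) [i..<j]"

lemma rprod_segments:
  assumes "i < j" "mono_on {i..j} S" "S j \<le> length (snd q)"
  shows "rprod (segments q S i j) = segment q (S i) (S j)"
  using assms concat_slices[of i j S "snd q"]
  by (simp add: rprod_def segments_def segment_def psrc_def upt_conv_Cons o_def)

section \<open>Ambiguities\<close>

lemma arrow_path_path: "e \<in> arrs Q \<Longrightarrow> is_path Q (arrow_path Q e)"
  using arrow_ends by (simp add: arrow_path_def is_path_Cons)

lemma proper_prefixes_not_inI_iff:
  assumes p: "is_path Q p" and "snd p \<noteq> []"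
  shows "(\<forall>q. is_prefix Q q p \<and> q \<noteq> p \<longrightarrow> \<not> inI Q R q)
    \<longleftrightarrow> \<not> (\<exists>r\<in>R. sublist (snd r) (butlast (snd p)))"
proof
  assume H: "\<forall>q. is_prefix Q q p \<and> q \<noteq> p \<longrightarrow> \<not> inI Q R q"
  define q where "q = (fst p, butlast (snd p))"
  define c where "c = (ptgt Q q, [last (snd p)])"
  have "is_path Q (fst p, butlast (snd p) @ [last (snd p)])" using p \<open>snd p \<noteq> []\<close> by simp
  then have "is_path Q q" "is_path Q c" by (simp_all add: is_path_append q_def c_def)
  moreover have "p = pcat c q" "composable Q c q"
    using \<open>snd p \<noteq> []\<close> by (simp_all add: q_def c_def pcat_def composable_def psrc_def)
  moreover have "q \<noteq> p"
    using \<open>snd p \<noteq> []\<close> by (cases "snd p" rule: rev_cases) (auto simp: q_def prod_eq_iff)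
  ultimately have "\<not> inI Q R q" using H unfolding is_prefix_def by blast
  then show "\<not> (\<exists>r\<in>R. sublist (snd r) (butlast (snd p)))"
    using inI_iff[OF \<open>is_path Q q\<close>] by (simp add: q_def)
next
  assume irred: "\<not> (\<exists>r\<in>R. sublist (snd r) (butlast (snd p)))"
  show "\<forall>q. is_prefix Q q p \<and> q \<noteq> p \<longrightarrow> \<not> inI Q R q"
  proof (intro allI impI)
    fix q assume "is_prefix Q q p \<and> q \<noteq> p"
    then obtain c where "is_path Q q" "p = pcat c q" "snd c \<noteq> []"
      by (auto simp: is_prefix_def pcat_def prod_eq_iff)
    then have "sublist (snd q) (butlast (snd p))" by (simp add: butlast_append)
    then show "\<not> inI Q R q"
      using irred inI_iff[OF \<open>is_path Q q\<close>] sublist_order.order_trans by blast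
  qed
qed

lemma proper_suffixes_not_inI:
  assumes p: "is_path Q p" and "snd p \<noteq> []"
    and H: "\<forall>q. is_suffix Q q p \<and> q \<noteq> p \<longrightarrow> \<not> inI Q R q"
  shows "\<not> (\<exists>r\<in>R. sublist (snd r) (tl (snd p)))"
proof -
  define a where "a = (fst p, [hd (snd p)])"
  define q where "q = (ptgt Q a, tl (snd p))"
  have "is_path Q (fst p, [hd (snd p)] @ tl (snd p))" using p \<open>snd p \<noteq> []\<close> by simp
  then have "is_path Q a" "is_path Q q" by (simp_all only: is_path_append a_def q_def)
  moreover have "p = pcat q a" "composable Q q a"
    using \<open>snd p \<noteq> []\<close> by (simp_all add: q_def a_def pcat_def composable_def psrc_def)
  moreover have "q \<noteq> p" using \<open>snd p \<noteq> []\<close> by (cases "snd p") (auto simp: q_def)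
  ultimately have "\<not> inI Q R q" using H unfolding is_suffix_def by blast
  then show ?thesis using inI_iff[OF \<open>is_path Q q\<close>] by (simp add: q_def)
qed

lemma segment_nonempty:
  "reducible_in q i k \<Longrightarrow> k \<le> length (snd q) \<Longrightarrow> snd (segment q i k) \<noteq> []"
  using reducible_segments.reducible_length[OF reducible_segments_reducible_in, of q i k]
  by (simp add: segment_def)

lemma segment_prefix_minimal_iff:
  assumes q: "is_path Q q" and "i \<le> k" "k \<le> length (snd q)" and "reducible_in q i k"
  shows "(\<forall>q'. is_prefix Q q' (segment q i k) \<and> q' \<noteq> segment q i k \<longrightarrow> \<not> inI Q R q')
    \<longleftrightarrow> \<not> reducible_in q i (k - 1)"
proof -
  have "butlast (snd (segment q i k)) = slice i (k - 1) (snd q)"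
    using assms(3) by (simp add: segment_def butlast_drop butlast_take)
  then show ?thesis
    using proper_prefixes_not_inI_iff[OF segment_path(1)[OF assms(1-3)]] segment_nonempty assms(3,4)
    by (simp add: reducible_in_def)
qed

lemma segment_suffix_minimal:
  assumes q: "is_path Q q" and "i \<le> k" "k \<le> length (snd q)" and "reducible_in q i k"
    and "\<forall>q'. is_suffix Q q' (segment q i k) \<and> q' \<noteq> segment q i k \<longrightarrow> \<not> inI Q R q'"
  shows "\<not> reducible_in q (Suc i) k"
proof -
  have "tl (snd (segment q i k)) = slice (Suc i) k (snd q)"
    by (simp add: segment_def drop_Suc tl_drop)
  then show ?thesis
    using proper_suffixes_not_inI[OF segment_path(1)[OF assms(1-3)] segment_nonempty assms(5)] assms(3,4)
    by (simp add: reducible_in_def)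
qed

lemma path_chain_offsets:
  assumes "ws \<noteq> []" "path_chain ws" "q = rprod ws"
  defines "S \<equiv> offset (map snd ws)"
  shows "is_path Q q" "ws = segments q S 0 (length ws)" "mono S"
    "S (length ws) = length (snd q)" "S i \<le> length (snd q)"
proof -
  show "is_path Q q" using path_chain_rprod assms by blast
  show "ws = segments q S 0 (length ws)"
    using path_chain_nth_segment[OF assms(1,2)] assms(3)
    by (intro nth_equalityI) (simp_all add: segments_def S_def)
  show "mono S" unfolding S_def by (rule monoI) (rule offset_mono)
  show "S (length ws) = length (snd q)" "S i \<le> length (snd q)"
    using offset_length[of "map snd ws"] offset_le_length[of "map snd ws" i] assms(3)
    by (simp_all add: S_def rprod_def)
qed

lemma right_decomp_cuts:
  assumes rd: "right_decomp Q R m ws q"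
  defines "S \<equiv> offset (map snd ws)"
  shows "is_path Q q" "ws = segments q S 0 (Suc m)" "mono S"
    "reducible_segments.right_cuts (reducible_in q) m (length (snd q)) S"
proof -
  obtain e where len: "length ws = Suc m" and e: "e \<in> arrs Q" "ws ! 0 = arrow_path Q e"
    and bas: "\<forall>i\<in>{1..m}. ws ! i \<in> basis Q R"
    and pairs: "\<forall>i<m. composable Q (ws ! Suc i) (ws ! i) \<and> inI Q R (pcat (ws ! Suc i) (ws ! i))
           \<and> (\<forall>q. is_prefix Q q (pcat (ws ! Suc i) (ws ! i)) \<and> q \<noteq> pcat (ws ! Suc i) (ws ! i)
                  \<longrightarrow> \<not> inI Q R q)"
    and qw: "q = rprod ws"
    using rd unfolding right_decomp_def by blast
  have "path_chain ws"
    unfolding path_chain_def using e bas pairs len arrow_path_path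
    by (auto simp: basis_def less_Suc_eq_0_disj)
  moreover have "ws \<noteq> []" using len by auto
  ultimately have q: "is_path Q q" and ws: "ws = segments q S 0 (Suc m)" and "mono S"
    and SL: "S (Suc m) = length (snd q)" and Sle: "\<And>i. S i \<le> length (snd q)"
    using path_chain_offsets[OF _ _ qw] len unfolding S_def by auto
  then show "is_path Q q" "ws = segments q S 0 (Suc m)" "mono S" by blast+
  have nth: "ws ! i = segment q (S i) (S (Suc i))" if "i \<le> m" for i
    using that by (subst ws) (simp add: segments_def del: upt_Suc)
  have valid: "i \<le> j \<Longrightarrow> S i \<le> S j" for i j using \<open>mono S\<close> by (simp add: mono_def)
  have "S 1 = 1" using offset_Suc[of 0 "map snd ws"] e len by (simp add: S_def arrow_path_def)
  moreover have "\<not> reducible_in q (S i) (S (Suc i))" if "1 \<le> i" "i \<le> m" for i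
    using bas[rule_format, of i] that nth[of i] segment_basis_iff[OF q valid Sle, of i "Suc i"] by simp
  moreover have "reducible_in q (S i) (S (Suc (Suc i)))
      \<and> \<not> reducible_in q (S i) (S (Suc (Suc i)) - 1)" if "i < m" for i
  proof -
    have pr: "pcat (ws ! Suc i) (ws ! i) = segment q (S i) (S (Suc (Suc i)))"
      using that nth[of i] nth[of "Suc i"] valid[of i "Suc i"] valid[of "Suc i" "Suc (Suc i)"] Sle
        pcat_segments[of "S i" "S (Suc i)" "S (Suc (Suc i))" q] by simp
    moreover have red: "reducible_in q (S i) (S (Suc (Suc i)))"
      using pairs[rule_format, OF that] segment_inI_iff[OF q valid[of i "Suc (Suc i)"] Sle] pr by simp
    ultimately show ?thesis
      using pairs[rule_format, OF that] segment_prefix_minimal_iff[OF q valid[of i "Suc (Suc i)"] Sle red]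
      by simp
  qed
  ultimately show "reducible_segments.right_cuts (reducible_in q) m (length (snd q)) S"
    unfolding reducible_segments.right_cuts_def[OF reducible_segments_reducible_in]
    using SL by (simp add: S_def)
qed

lemma left_decomp_path_chain:
  assumes ld: "left_decomp Q R m ws q"
  shows "path_chain (rev ws)" "q = rprod (rev ws)"
proof -
  have len: "length ws = Suc m" and qw: "q = lprod ws" using ld by (simp_all add: left_decomp_def)
  have rev_nth': "rev ws ! j = ws ! (m - j)" if "j \<le> m" for j using that len by (simp add: rev_nth)
  have "ws \<noteq> []" using len by auto
  then show "q = rprod (rev ws)" using qw lprod_rev[of "rev ws"] by simp
  show "path_chain (rev ws)"
    unfolding path_chain_def
  proof (intro conjI allI impI)
    fix j assume "j < length (rev ws)"
    then show "is_path Q (rev ws ! j)"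
      using ld rev_nth'[of j] len arrow_path_path
      by (cases "m - j") (auto simp: basis_def left_decomp_def)
  next
    fix j assume "Suc j < length (rev ws)"
    then have "m - Suc j < m" "m - j = Suc (m - Suc j)" using len by simp_all
    then show "composable Q (rev ws ! Suc j) (rev ws ! j)"
      using ld rev_nth'[of j] rev_nth'[of "Suc j"] \<open>Suc j < length (rev ws)\<close> len
      by (simp add: left_decomp_def)
  qed
qed

lemma left_decomp_cuts:
  assumes ld: "left_decomp Q R m ws q"
  defines "A \<equiv> offset (map snd (rev ws))"
  shows "is_path Q q" "rev ws = segments q A 0 (Suc m)" "mono A"
    "reducible_segments.left_cuts (reducible_in q) m (length (snd q)) A"
proof -
  obtain e where len: "length ws = Suc m" and e: "e \<in> arrs Q" "ws ! 0 = arrow_path Q e"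
    and bas: "\<forall>i\<in>{1..m}. ws ! i \<in> basis Q R"
    and pairs: "\<forall>i<m. composable Q (ws ! i) (ws ! Suc i) \<and> inI Q R (pcat (ws ! i) (ws ! Suc i))
           \<and> (\<forall>q. is_suffix Q q (pcat (ws ! i) (ws ! Suc i)) \<and> q \<noteq> pcat (ws ! i) (ws ! Suc i)
                  \<longrightarrow> \<not> inI Q R q)"
    using ld unfolding left_decomp_def by blast
  have "rev ws \<noteq> []" using len by auto
  then have q: "is_path Q q" and ws: "rev ws = segments q A 0 (Suc m)" and "mono A"
    and AL: "A (Suc m) = length (snd q)" and Ale: "\<And>i. A i \<le> length (snd q)"
    using path_chain_offsets[OF _ left_decomp_path_chain[OF ld]] len unfolding A_def by auto
  then show "is_path Q q" "rev ws = segments q A 0 (Suc m)" "mono A" by blast+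
  have nth: "ws ! (m - j) = segment q (A j) (A (Suc j))" if "j \<le> m" for j
  proof -
    have "rev ws ! j = segment q (A j) (A (Suc j))"
      using that by (subst ws) (simp add: segments_def del: upt_Suc)
    then show ?thesis using that len by (simp add: rev_nth)
  qed
  have valid: "i \<le> j \<Longrightarrow> A i \<le> A j" for i j using \<open>mono A\<close> by (simp add: mono_def)
  have "A (Suc m) = A m + length (snd (rev ws ! m))"
    using offset_Suc[of m "map snd (rev ws)"] len by (simp add: A_def)
  then have "Suc (A m) = length (snd q)" using e len AL by (simp add: rev_nth arrow_path_def)
  moreover have "\<not> reducible_in q (A j) (A (Suc j))" if "j < m" for j
    using bas[rule_format, of "m - j"] that nth[of j] segment_basis_iff[OF q valid Ale, of j "Suc j"]
    by simp
  moreover have "reducible_in q (A j) (A (Suc (Suc j)))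
      \<and> \<not> reducible_in q (Suc (A j)) (A (Suc (Suc j)))" if "j < m" for j
  proof -
    define i where "i = m - Suc j"
    have "i < m" "m - j = Suc i" using that by (simp_all add: i_def)
    have pr: "pcat (ws ! i) (ws ! Suc i) = segment q (A j) (A (Suc (Suc j)))"
      using that nth[of j] nth[of "Suc j"] valid[of j "Suc j"] valid[of "Suc j" "Suc (Suc j)"] Ale
        pcat_segments[of "A j" "A (Suc j)" "A (Suc (Suc j))" q] \<open>m - j = Suc i\<close> by (simp add: i_def)
    moreover have red: "reducible_in q (A j) (A (Suc (Suc j)))"
      using pairs[rule_format, OF \<open>i < m\<close>] segment_inI_iff[OF q valid[of j "Suc (Suc j)"] Ale] pr
      by simp
    ultimately show ?thesis
      using pairs[rule_format, OF \<open>i < m\<close>] segment_suffix_minimal[OF q valid[of j "Suc (Suc j)"] Ale red]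
      by simp
  qed
  ultimately show "reducible_segments.left_cuts (reducible_in q) m (length (snd q)) A"
    unfolding reducible_segments.left_cuts_def[OF reducible_segments_reducible_in]
    using AL by (simp add: A_def)
qed

lemma segments_cong:
  "(\<And>l. i \<le> l \<Longrightarrow> l \<le> j \<Longrightarrow> S l = S' l) \<Longrightarrow> segments q S i j = segments q S' i j"
  by (simp add: segments_def)

lemma left_decomp_unique:
  assumes "left_decomp Q R m ws q" "left_decomp Q R m ws' q"
  shows "ws = ws'"
proof -
  let ?A = "offset (map snd (rev ws))" and ?A' = "offset (map snd (rev ws'))"
  have "?A l = ?A' l" if "l \<le> Suc m" for l
    using reducible_segments.left_cuts_unique[OF reducible_segments_reducible_in]
      left_decomp_cuts(4)[OF assms(1)] left_decomp_cuts(4)[OF assms(2)] that by blast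
  then have "segments q ?A 0 (Suc m) = segments q ?A' 0 (Suc m)" by (intro segments_cong)
  then have "rev ws = rev ws'"
    using left_decomp_cuts(2)[OF assms(1)] left_decomp_cuts(2)[OF assms(2)] by simp
  then show ?thesis by simp
qed

lemma right_decomp_unique:
  assumes "right_decomp Q R m ws q" "right_decomp Q R m ws' q"
  shows "ws = ws'"
proof -
  let ?S = "offset (map snd ws)" and ?S' = "offset (map snd ws')"
  have "?S l = ?S' l" if "l \<le> Suc m" for l
    using reducible_segments.right_cuts_unique[OF reducible_segments_reducible_in]
      right_decomp_cuts(4)[OF assms(1)] right_decomp_cuts(4)[OF assms(2)] that by blast
  then have "segments q ?S 0 (Suc m) = segments q ?S' 0 (Suc m)" by (intro segments_cong)
  then show ?thesis
    using right_decomp_cuts(2)[OF assms(1)] right_decomp_cuts(2)[OF assms(2)] by simp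
qed

lemma right_decomp_of_cuts:
  assumes q: "is_path Q q"
    and cuts: "reducible_segments.right_cuts (reducible_in q) m (length (snd q)) S"
    and mono: "mono_on {0..Suc m} S"
  shows "right_decomp Q R m (segments q S 0 (Suc m)) q"
proof -
  interpret reducible_segments "reducible_in q" by (rule reducible_segments_reducible_in)
  let ?vs = "segments q S 0 (Suc m)"
  have valid: "S i \<le> S j" "S j \<le> length (snd q)" if "i \<le> j" "j \<le> Suc m" for i j
    using mono_onD[OF mono, of i j] mono_onD[OF mono, of j "Suc m"] cuts that
    by (simp_all add: right_cuts_def)
  have nth: "?vs ! j = segment q (S j) (S (Suc j))" if "j \<le> m" for j
    using that by (simp add: segments_def del: upt_Suc)
  have "S 0 = 0" "S 1 = 1" using cuts by (simp_all add: right_cuts_def)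
  then obtain e es where qe: "snd q = e # es" using valid[of 1 "Suc m"] by (cases "snd q") auto
  then have "e \<in> arrs Q" "fst q = src_of Q e" using q path_src_hd[OF q] by (auto simp: is_path_def)
  then have arrow: "\<exists>e\<in>arrs Q. ?vs ! 0 = arrow_path Q e"
    using nth[of 0] \<open>S 0 = 0\<close> \<open>S 1 = 1\<close> qe by (simp add: segment_def vertex_at_def arrow_path_def)
  have basis: "?vs ! i \<in> basis Q R" if "i \<in> {1..m}" for i
    using cuts that nth[of i] segment_basis_iff[OF q valid[of i "Suc i"]] by (simp add: right_cuts_def)
  have pairs: "composable Q (?vs ! Suc i) (?vs ! i) \<and> inI Q R (pcat (?vs ! Suc i) (?vs ! i))
      \<and> (\<forall>q'. is_prefix Q q' (pcat (?vs ! Suc i) (?vs ! i)) \<and> q' \<noteq> pcat (?vs ! Suc i) (?vs ! i)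
             \<longrightarrow> \<not> inI Q R q')" if "i < m" for i
  proof -
    have "pcat (?vs ! Suc i) (?vs ! i) = segment q (S i) (S (Suc (Suc i)))"
      using that nth[of i] nth[of "Suc i"] valid[of i "Suc i"] valid[of "Suc i" "Suc (Suc i)"]
        pcat_segments[of "S i" "S (Suc i)" "S (Suc (Suc i))" q] by simp
    moreover have "composable Q (?vs ! Suc i) (?vs ! i)"
      using that nth[of i] nth[of "Suc i"] valid[of i "Suc i"] composable_segments[OF q] by simp
    ultimately show ?thesis
      using cuts that segment_inI_iff[OF q] segment_prefix_minimal_iff[OF q] valid[of i "Suc (Suc i)"]
      by (simp add: right_cuts_def)
  qed
  have "q = rprod ?vs"
    using rprod_segments[OF _ mono, of q] valid[of "Suc m" "Suc m"] cuts segment_whole[of q]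
    by (simp add: right_cuts_def)
  then show ?thesis unfolding right_decomp_def using arrow basis pairs by (simp add: segments_def)
qed

text \<open>Left and right ambiguities coincide: the greedy cuts of a left ambiguity are the cuts
  of a right decomposition.\<close>
lemma right_decomp_exists:
  assumes "left_decomp Q R m ws q"
  obtains vs where "right_decomp Q R m vs q"
proof -
  interpret reducible_segments "reducible_in q" by (rule reducible_segments_reducible_in)
  have q: "is_path Q q" and A: "left_cuts m (length (snd q)) (offset (map snd (rev ws)))"
    using left_decomp_cuts[OF assms] by simp_all
  have "mono_on {0..Suc m} greedy_cut" using greedy_cut_mono[OF A] by (auto intro: mono_onI)
  then show thesis using right_decomp_of_cuts[OF q right_cuts_greedy[OF A]] that by blast
qed

lemma path_split:
  assumes "is_path Q q" "k \<le> length (snd q)"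
  shows "q = pcat (segment q k (length (snd q))) (segment q 0 k)"
    "composable Q (segment q k (length (snd q))) (segment q 0 k)"
    "is_path Q (segment q 0 k)" "is_path Q (segment q k (length (snd q)))"
  using assms pcat_segments[of 0 k "length (snd q)" q] segment_whole[of q]
    composable_segments segment_path(1)
  by auto

text \<open>\<open>sigma\<close> and \<open>pi_amb\<close> are defined by \<open>THE\<close>; the following two lemmas rest on the uniqueness
  of decompositions, and for \<open>pi_amb\<close> also on the existence of a right decomposition.\<close>
lemma sigma_split:
  assumes "q \<in> Gamma Q R (Suc n)"
  shows "q = pcat (sigma Q R (Suc n) n q) (pre_of Q q (sigma Q R (Suc n) n q))"
proof -
  obtain ws where ld: "left_decomp Q R (Suc n) ws q" using assms by (auto simp: Gamma_def)
  define A where "A = offset (map snd (rev ws))"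
  note cuts = left_decomp_cuts[OF ld, folded A_def]
  have len: "length ws = Suc (Suc n)" using ld by (simp add: left_decomp_def)
  have AL: "A (Suc (Suc n)) = length (snd q)"
    using cuts(4) reducible_segments.left_cuts_def[OF reducible_segments_reducible_in] by simp
  have "rev ws = segment q (A 0) (A 1) # segments q A 1 (Suc (Suc n))"
    using cuts(2) by (simp add: segments_def upt_conv_Cons del: upt_Suc)
  then have "take (Suc n) ws = rev (segments q A 1 (Suc (Suc n)))"
    by (metis (no_types, lifting) length_rev len rev_eq_Cons_iff butlast_snoc butlast_conv_take diff_Suc_1)
  then have "lprod (take (Suc n) ws) = rprod (segments q A 1 (Suc (Suc n)))"
    by (simp only:) (rule lprod_rev, simp add: segments_def)
  also have "\<dots> = segment q (A 1) (length (snd q))"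
    using cuts(3) AL rprod_segments[of 1 "Suc (Suc n)" A q] by (simp add: mono_on_def mono_def)
  finally have "lprod (take (Suc n) ws) = segment q (A 1) (length (snd q))" .
  moreover have "sigma Q R (Suc n) n q = lprod (take (Suc n) ws)"
    unfolding sigma_def by (rule the_equality) (use ld left_decomp_unique in blast)+
  moreover have "A 1 \<le> length (snd q)"
    using offset_le_length[of "map snd (rev ws)" 1] ld by (simp add: A_def left_decomp_def lprod_def rev_map)
  moreover note split = path_split[OF cuts(1) \<open>A 1 \<le> length (snd q)\<close>]
  ultimately show ?thesis using pre_of_eq[OF split(3,2,1)] by simp
qed

lemma pi_split:
  assumes "q \<in> Gamma Q R (Suc n)"
  shows "q = pcat (suf_of Q q (pi_amb Q R (Suc n) n q)) (pi_amb Q R (Suc n) n q)"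
proof -
  obtain ws where "left_decomp Q R (Suc n) ws q" using assms by (auto simp: Gamma_def)
  then obtain vs where rd: "right_decomp Q R (Suc n) vs q" by (rule right_decomp_exists)
  define S where "S = offset (map snd vs)"
  note cuts = right_decomp_cuts[OF rd, folded S_def]
  have "take (Suc n) vs = segments q S 0 (Suc n)"
    by (subst cuts(2)) (simp add: segments_def take_map del: upt_Suc)
  moreover have "S (Suc n) \<le> length (snd q)"
    using offset_le_length[of "map snd vs" "Suc n"] rd by (simp add: S_def right_decomp_def rprod_def)
  ultimately have "rprod (take (Suc n) vs) = segment q 0 (S (Suc n))"
    using rprod_segments[of 0 "Suc n" S q] cuts(3) by (simp add: mono_on_def mono_def S_def)
  moreover have "pi_amb Q R (Suc n) n q = rprod (take (Suc n) vs)"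
    unfolding pi_amb_def by (rule the_equality) (use rd right_decomp_unique in blast)+
  moreover note split = path_split[OF cuts(1) \<open>S (Suc n) \<le> length (snd q)\<close>]
  ultimately show ?thesis using suf_of_eq[OF split(4,2,1)] by simp
qed

lemma Gamma_path:
  assumes "q \<in> Gamma Q R n"
  shows "is_path Q q" "snd q \<noteq> []"
proof -
  obtain ws where ld: "left_decomp Q R n ws q" using assms by (auto simp: Gamma_def)
  show "is_path Q q" using left_decomp_cuts(1)[OF ld] .
  have "Suc (offset (map snd (rev ws)) n) = length (snd q)"
    using left_decomp_cuts(4)[OF ld] reducible_segments.left_cuts_def[OF reducible_segments_reducible_in]
    by simp
  then show "snd q \<noteq> []" by auto
qed

lemma Gamma_Suc_not_basis:
  assumes "q \<in> Gamma Q R (Suc n)"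
  shows "q \<notin> basis Q R"
proof -
  obtain ws where ld: "left_decomp Q R (Suc n) ws q" using assms by (auto simp: Gamma_def)
  let ?A = "offset (map snd (rev ws))"
  have "\<forall>i<Suc n. reducible_in q (?A i) (?A (Suc (Suc i)))"
    using left_decomp_cuts(4)[OF ld] reducible_segments.left_cuts_def[OF reducible_segments_reducible_in]
    by simp
  then have "reducible_in q (?A 0) (?A 2)" by (metis zero_less_Suc numeral_2_eq_2)
  then have "\<exists>r\<in>R. sublist (snd r) (snd q)"
    unfolding reducible_in_def using sublist_order.order_trans sublist_drop sublist_take by meson
  then show ?thesis by (simp add: basis_iff)
qed

section \<open>Irreducible cocycles\<close>

lemma delta_outside:
  assumes "\<not> (q \<in> Gamma Q R (Suc n) \<and> b' \<in> basis Q R \<and> parallel Q q b')"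
  shows "delta Q R n x q b' = 0"
  unfolding delta_def if_not_P[OF assms] ..

lemma delta_zero: "delta Q R n (\<lambda>_ _. 0) q b' = 0"
  by (simp add: delta_def)

lemma delta_local:
  assumes agree: "\<And>p b X Y. snd q = X @ snd p @ Y \<Longrightarrow> snd b' = X @ snd b @ Y \<Longrightarrow> x p b = y p b"
  shows "delta Q R n x q b' = delta Q R n y q b'"
proof (cases "q \<in> Gamma Q R (Suc n) \<and> b' \<in> basis Q R \<and> parallel Q q b'")
  case False
  then show ?thesis by (simp add: delta_outside)
next
  case True
  define \<pi> where "\<pi> = pi_amb Q R (Suc n) n q"
  define \<sigma> where "\<sigma> = sigma Q R (Suc n) n q"
  define sf where "sf = suf_of Q q \<pi>"
  define pr where "pr = pre_of Q q \<sigma>"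
  have q\<pi>: "q = pcat sf \<pi>" and q\<sigma>: "q = pcat \<sigma> pr"
    using pi_split sigma_split True by (simp_all add: sf_def \<pi>_def pr_def \<sigma>_def)
  have odd_terms: "x p b * (if pcat c (pcat b a) = b' then 1 else 0)
      = y p b * (if pcat c (pcat b a) = b' then 1 else 0)" if "occ Q p q c a" for c p a b
    using that agree[of "snd a" p "snd c" b] by (auto simp: occ_def)
  have \<pi>_terms: "x \<pi> b * (if pcat sf b = b' then 1 else 0)
      = y \<pi> b * (if pcat sf b = b' then 1 else 0)" for b
    using q\<pi> agree[of "[]" \<pi> "snd sf" b] by auto
  have \<sigma>_terms: "x \<sigma> b * (if pcat b pr = b' then 1 else 0)
      = y \<sigma> b * (if pcat b pr = b' then 1 else 0)" for b
    using q\<sigma> agree[of "snd pr" \<sigma> "[]" b] by auto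
  have "(\<Sum>(c, p, a)\<in>{(c, p, a). p \<in> Gamma Q R n \<and> occ Q p q c a}.
          \<Sum>b\<in>{b \<in> basis Q R. parallel Q p b}. x p b * (if pcat c (pcat b a) = b' then 1 else 0))
      = (\<Sum>(c, p, a)\<in>{(c, p, a). p \<in> Gamma Q R n \<and> occ Q p q c a}.
          \<Sum>b\<in>{b \<in> basis Q R. parallel Q p b}. y p b * (if pcat c (pcat b a) = b' then 1 else 0))"
    by (rule sum.cong[OF refl]) (auto intro!: sum.cong odd_terms)
  moreover have "(\<lambda>b. x \<pi> b * (if pcat sf b = b' then 1 else 0))
      = (\<lambda>b. y \<pi> b * (if pcat sf b = b' then 1 else 0))"
    "(\<lambda>b. x \<sigma> b * (if pcat b pr = b' then 1 else 0))
      = (\<lambda>b. y \<sigma> b * (if pcat b pr = b' then 1 else 0))"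
    using \<pi>_terms \<sigma>_terms by auto
  ultimately show ?thesis
    using True
    unfolding delta_def Let_def \<pi>_def[symmetric] \<sigma>_def[symmetric] sf_def[symmetric] pr_def[symmetric]
    by (simp only: if_True simp_thms)
qed

lemma contributing_term_core:
  assumes "q \<in> Gamma Q R (Suc n)" "b' \<in> basis Q R" "parallel Q q b'"
    and "p \<in> Gamma Q R n" "b \<in> basis Q R" "parallel Q p b"
    and "snd q = X @ snd p @ Y" "snd b' = X @ snd b @ Y"
  shows "p \<noteq> b" "strip_common_affixes (snd q) (snd b') = strip_common_affixes (snd p) (snd b)"
proof -
  show "p \<noteq> b"
  proof
    assume "p = b"
    then have "q = b'" using assms(3,7,8) by (simp add: parallel_def psrc_def prod_eq_iff)
    then show False using assms(1,2) Gamma_Suc_not_basis by blast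
  qed
  moreover have "is_path Q p" "is_path Q b" using assms(4,5) Gamma_path(1) by (simp_all add: basis_def)
  ultimately have "separated (snd p) (snd b)" using separated_parallel_paths assms(6) by blast
  then show "strip_common_affixes (snd q) (snd b') = strip_common_affixes (snd p) (snd b)"
    using assms(7,8) strip_common_affixes_context by simp
qed

lemma cochain_sum_subset:
  assumes "finite I" "J \<subseteq> I" "\<And>i. i \<in> I - J \<Longrightarrow> (p i, b i) \<noteq> (p', b'')"
  shows "cochain_sum \<alpha> p b J p' b'' = cochain_sum \<alpha> p b I p' b''"
  unfolding cochain_sum_def using assms by (intro sum.mono_neutral_left) auto

lemma cochain_sum_vanishes:
  "(\<And>i. i \<in> J \<Longrightarrow> (p i, b i) \<noteq> (p', b'')) \<Longrightarrow> cochain_sum \<alpha> p b J p' b'' = 0"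
  unfolding cochain_sum_def by (rule sum.neutral) auto

text \<open>By locality, a term \<open>(p i||b i)\<close> only meets coefficients \<open>(q||b')\<close> of the same core.\<close>
lemma delta_cochain_sum_restrict:
  assumes terms: "\<forall>i\<in>I. p i \<in> Gamma Q R n \<and> b i \<in> basis Q R \<and> parallel Q (p i) (b i)"
    and "finite I" "J \<subseteq> I"
    and cocycle: "delta Q R n (cochain_sum \<alpha> p b I) = (\<lambda>_ _. 0)"
    and closed: "\<And>i j. i \<in> I \<Longrightarrow> j \<in> J \<Longrightarrow> p i \<noteq> b i \<Longrightarrow> p j \<noteq> b j
      \<Longrightarrow> strip_common_affixes (snd (p i)) (snd (b i)) = strip_common_affixes (snd (p j)) (snd (b j))
      \<Longrightarrow> i \<in> J"
  shows "delta Q R n (cochain_sum \<alpha> p b J) = (\<lambda>_ _. 0)"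
proof (intro ext)
  fix q b'
  let ?core = "\<lambda>i. strip_common_affixes (snd (p i)) (snd (b i))"
  show "delta Q R n (cochain_sum \<alpha> p b J) q b' = 0"
  proof (cases "q \<in> Gamma Q R (Suc n) \<and> b' \<in> basis Q R \<and> parallel Q q b'")
    case False
    then show ?thesis by (rule delta_outside)
  next
    case True
    have contrib: "p i \<noteq> b i \<and> ?core i = strip_common_affixes (snd q) (snd b')"
      if "i \<in> I" "snd q = X @ snd (p i) @ Y" "snd b' = X @ snd (b i) @ Y" for i X Y
      using True terms that contributing_term_core[of q n b' "p i" "b i" X Y] by simp
    show ?thesis
    proof (cases "\<exists>j\<in>J. p j \<noteq> b j \<and> ?core j = strip_common_affixes (snd q) (snd b')")
      case True
      then obtain j where j: "j \<in> J" "p j \<noteq> b j" "?core j = strip_common_affixes (snd q) (snd b')"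
        by blast
      have "delta Q R n (cochain_sum \<alpha> p b J) q b' = delta Q R n (cochain_sum \<alpha> p b I) q b'"
      proof (rule delta_local, rule cochain_sum_subset[OF \<open>finite I\<close> \<open>J \<subseteq> I\<close>])
        fix p' b'' :: "('v, 'e) path" and X Y i
        assume ctx: "snd q = X @ snd p' @ Y" "snd b' = X @ snd b'' @ Y" and i: "i \<in> I - J"
        show "(p i, b i) \<noteq> (p', b'')"
        proof
          assume "(p i, b i) = (p', b'')"
          then have "p i \<noteq> b i" "?core i = ?core j" using contrib[of i X Y] ctx i j by auto
          then show False using closed[of i j] i j by blast
        qed
      qed
      then show ?thesis using cocycle by simp
    next
      case False
      then have "delta Q R n (cochain_sum \<alpha> p b J) q b' = delta Q R n (\<lambda>_ _. 0) q b'"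
        using \<open>J \<subseteq> I\<close> contrib by (intro delta_local cochain_sum_vanishes) blast
      then show ?thesis by (simp add: delta_zero)
    qed
  qed
qed

text \<open>The subcochain of the terms in the core class of the first term (or of the first term
  alone, if it is the diagonal pair) is again a cocycle, so by irreducibility it is everything.\<close>
lemma irreducible_cocycle_one_class:
  fixes \<alpha> :: "nat \<Rightarrow> 'k::field"
  assumes "k \<ge> 1"
    and terms: "\<forall>i\<in>{1..k}. p i \<in> Gamma Q R n \<and> b i \<in> basis Q R \<and> parallel Q (p i) (b i)"
    and nonzero: "\<forall>i\<in>{1..k}. \<alpha> i \<noteq> 0"
    and cocycle: "delta Q R n (cochain_sum \<alpha> p b {1..k}) = (\<lambda>_ _. 0)"
    and irreducible: "\<forall>J (\<beta> :: nat \<Rightarrow> 'k). J \<subseteq> {1..k} \<and> J \<noteq> {} \<and> J \<noteq> {1..k} \<and> (\<forall>j\<in>J. \<beta> j \<noteq> 0)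
           \<longrightarrow> delta Q R n (cochain_sum \<beta> p b J) \<noteq> (\<lambda>_ _. 0)"
  defines "core i \<equiv> strip_common_affixes (snd (p i)) (snd (b i))"
  shows "p 1 = b 1 \<Longrightarrow> k = 1"
    and "p 1 \<noteq> b 1 \<Longrightarrow> i \<in> {1..k} \<Longrightarrow> p i \<noteq> b i \<and> core i = core 1"
proof -
  define J where "J = {j \<in> {1..k}. j = 1 \<or> (p 1 \<noteq> b 1 \<and> p j \<noteq> b j \<and> core j = core 1)}"
  have "delta Q R n (cochain_sum \<alpha> p b J) = (\<lambda>_ _. 0)"
    by (rule delta_cochain_sum_restrict[OF terms _ _ cocycle]) (auto simp: J_def core_def)
  moreover have "J \<subseteq> {1..k}" "1 \<in> J" "\<forall>j\<in>J. \<alpha> j \<noteq> 0" using \<open>k \<ge> 1\<close> nonzero by (auto simp: J_def)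
  ultimately have all: "J = {1..k}" using irreducible by blast
  show "p 1 = b 1 \<Longrightarrow> k = 1" using all \<open>k \<ge> 1\<close> by (auto simp: J_def set_eq_iff)
  assume "p 1 \<noteq> b 1" "i \<in> {1..k}"
  then have "i \<in> J" using all by simp
  then show "p i \<noteq> b i \<and> core i = core 1" using \<open>p 1 \<noteq> b 1\<close> by (auto simp: J_def)
qed

lemma irreducible_cocycle_common_core:
  fixes \<alpha> :: "nat \<Rightarrow> 'k::field"
  assumes "k \<ge> 1"
    and terms: "\<forall>i\<in>{1..k}. p i \<in> Gamma Q R n \<and> b i \<in> basis Q R \<and> parallel Q (p i) (b i)"
    and nonzero: "\<forall>i\<in>{1..k}. \<alpha> i \<noteq> 0"
    and cocycle: "delta Q R n (cochain_sum \<alpha> p b {1..k}) = (\<lambda>_ _. 0)"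
    and irreducible: "\<forall>J (\<beta> :: nat \<Rightarrow> 'k). J \<subseteq> {1..k} \<and> J \<noteq> {} \<and> J \<noteq> {1..k} \<and> (\<forall>j\<in>J. \<beta> j \<noteq> 0)
           \<longrightarrow> delta Q R n (cochain_sum \<beta> p b J) \<noteq> (\<lambda>_ _. 0)"
  obtains P0 B0 where "P0 \<noteq> []" "B0 \<noteq> []"
    "\<forall>i\<in>{1..k}. \<exists>X Y. snd (p i) = X @ P0 @ Y \<and> snd (b i) = X @ B0 @ Y"
proof -
  note one_class = irreducible_cocycle_one_class[OF assms]
  have "p 1 \<in> Gamma Q R n" "b 1 \<in> basis Q R" "parallel Q (p 1) (b 1)" using terms \<open>k \<ge> 1\<close> by auto
  then have path: "is_path Q (p 1)" "snd (p 1) \<noteq> []" "is_path Q (b 1)"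
    using Gamma_path[of "p 1"] by (simp_all add: basis_def)
  show ?thesis
  proof (cases "p 1 = b 1")
    case True
    then have "{1..k} = {1}" using one_class(1) by simp
    then show ?thesis
      using that[of "snd (p 1)" "snd (b 1)"] path True by (metis append_Nil append_Nil2 singletonD)
  next
    case False
    let ?core = "strip_common_affixes (snd (p 1)) (snd (b 1))"
    have "separated (snd (p 1)) (snd (b 1))"
      using separated_parallel_paths path \<open>parallel Q (p 1) (b 1)\<close> False by simp
    then have "fst ?core \<noteq> []" "snd ?core \<noteq> []" using strip_common_affixes_nonempty by blast+
    moreover have "\<exists>X Y. snd (p i) = X @ fst ?core @ Y \<and> snd (b i) = X @ snd ?core @ Y"
      if i: "i \<in> {1..k}" for i
    proof -
      obtain X Y where "snd (p i) = X @ fst (strip_common_affixes (snd (p i)) (snd (b i))) @ Y"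
        "snd (b i) = X @ snd (strip_common_affixes (snd (p i)) (snd (b i))) @ Y"
        by (rule strip_common_affixes_decomp)
      then show ?thesis using one_class(2)[OF False i] by auto
    qed
    ultimately show ?thesis using that[of "fst ?core" "snd ?core"] by blast
  qed
qed

lemma common_context_split:
  assumes p: "is_path Q p" and b: "b \<in> basis Q R" and "parallel Q p b"
    and "P0 \<noteq> []" "B0 \<noteq> []" and ep: "snd p = X @ P0 @ Y" and eb: "snd b = X @ B0 @ Y"
  defines "pt \<equiv> (src_of Q (hd P0), P0)" and "bt \<equiv> (src_of Q (hd B0), B0)"
  shows "is_path Q pt" "is_path Q bt"
    "\<exists>a c. a \<in> basis Q R \<and> c \<in> basis Q R \<and>
        composable Q pt a \<and> composable Q c pt \<and> composable Q bt a \<and> composable Q c bt \<and>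
        p = pcat c (pcat pt a) \<and> b = pcat c (pcat bt a)"
proof -
  obtain v where pv: "p = (v, X @ P0 @ Y)" using ep by (metis prod.collapse)
  have bv: "b = (v, X @ B0 @ Y)"
    using eb \<open>parallel Q p b\<close> pv by (metis fst_conv parallel_def prod.collapse psrc_def)
  have "is_path Q b" using b by (simp add: basis_def)
  define w where "w = ptgt Q (v, X)"
  have pX: "is_path Q (v, X)" and pP: "is_path Q (w, P0)" and pY: "is_path Q (ptgt Q (w, P0), Y)"
    using p pv by (simp_all add: is_path_append w_def)
  have bB: "is_path Q (w, B0)" and bY: "is_path Q (ptgt Q (w, B0), Y)"
    using \<open>is_path Q b\<close> bv by (simp_all add: is_path_append w_def)
  have "w = src_of Q (hd P0)" "w = src_of Q (hd B0)"
    using path_src_hd[OF pP] path_src_hd[OF bB] \<open>P0 \<noteq> []\<close> \<open>B0 \<noteq> []\<close> by simp_all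
  then have pt: "pt = (w, P0)" and bt: "bt = (w, B0)" by (simp_all add: pt_def bt_def)
  then show "is_path Q pt" "is_path Q bt" using pP bB by simp_all
  have "ptgt Q (w, P0) = ptgt Q (w, B0)"
  proof (cases "Y = []")
    case True
    then show ?thesis using \<open>parallel Q p b\<close> pv bv by (simp add: parallel_def ptgt_append w_def)
  next
    case False
    then show ?thesis using path_src_hd[OF pY] path_src_hd[OF bY] by simp
  qed
  moreover have "(v, X) \<in> basis Q R" using basis_sublist[OF b pX] eb by simp
  moreover have "(ptgt Q (w, P0), Y) \<in> basis Q R"
    using basis_sublist[OF b pY] eb by (metis append.assoc sublist_append_leftI snd_conv)
  ultimately show "\<exists>a c. a \<in> basis Q R \<and> c \<in> basis Q R \<and>
      composable Q pt a \<and> composable Q c pt \<and> composable Q bt a \<and> composable Q c bt \<and>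
      p = pcat c (pcat pt a) \<and> b = pcat c (pcat bt a)"
    using pt bt pv bv by (auto simp: composable_def psrc_def pcat_def w_def)
qed

end

theorem mainTheorem12:
  fixes Q :: "('v, 'e) quiver" and R :: "('v, 'e) path set"
    and n k :: nat and \<alpha> :: "nat \<Rightarrow> 'k::field" and p b :: "nat \<Rightarrow> ('v, 'e) path"
  assumes "finite (verts Q)" and "finite (arrs Q)"
    and "\<forall>e\<in>arrs Q. src_of Q e \<in> verts Q \<and> tgt_of Q e \<in> verts Q"
    and "monomial_rels Q R" and "triangular Q" and "finite (basis Q R)"
    and "k \<ge> 1"
    and "\<forall>i\<in>{1..k}. p i \<in> Gamma Q R n \<and> b i \<in> basis Q R \<and> parallel Q (p i) (b i)"
    and "\<forall>i\<in>{1..k}. \<alpha> i \<noteq> 0"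
    and "inj_on (\<lambda>i. (p i, b i)) {1..k}"
    and "delta Q R n (cochain_sum \<alpha> p b {1..k}) = (\<lambda>_ _. 0)"
    and "\<forall>J (\<beta> :: nat \<Rightarrow> 'k). J \<subseteq> {1..k} \<and> J \<noteq> {} \<and> J \<noteq> {1..k} \<and> (\<forall>j\<in>J. \<beta> j \<noteq> 0)
           \<longrightarrow> delta Q R n (cochain_sum \<beta> p b J) \<noteq> (\<lambda>_ _. 0)"
  shows "\<exists>pt bt. is_path Q pt \<and> snd pt \<noteq> [] \<and> is_path Q bt \<and> snd bt \<noteq> [] \<and>
     (\<forall>i\<in>{1..k}. \<exists>a c. a \<in> basis Q R \<and> c \<in> basis Q R \<and>
        composable Q pt a \<and> composable Q c pt \<and> composable Q bt a \<and> composable Q c bt \<and>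
        p i = pcat c (pcat pt a) \<and> b i = pcat c (pcat bt a))"
proof -
  interpret triangular_monomial Q R by unfold_locales (use assms(3-5) in auto)
  obtain P0 B0 where "P0 \<noteq> []" "B0 \<noteq> []"
    and core: "\<forall>i\<in>{1..k}. \<exists>X Y. snd (p i) = X @ P0 @ Y \<and> snd (b i) = X @ B0 @ Y"
    by (rule irreducible_cocycle_common_core[OF assms(7-9,11,12)])
  let ?pt = "(src_of Q (hd P0), P0)" and ?bt = "(src_of Q (hd B0), B0)"
  have "is_path Q ?pt \<and> is_path Q ?bt \<and> (\<exists>a c. a \<in> basis Q R \<and> c \<in> basis Q R \<and>
      composable Q ?pt a \<and> composable Q c ?pt \<and> composable Q ?bt a \<and> composable Q c ?bt \<and>
      p i = pcat c (pcat ?pt a) \<and> b i = pcat c (pcat ?bt a))" if i: "i \<in> {1..k}" for i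
  proof -
    obtain X Y where "snd (p i) = X @ P0 @ Y" "snd (b i) = X @ B0 @ Y" using core i by blast
    moreover have "p i \<in> Gamma Q R n" "b i \<in> basis Q R" "parallel Q (p i) (b i)" using assms(8) i by auto
    ultimately show ?thesis
      using common_context_split[OF Gamma_path(1) _ _ \<open>P0 \<noteq> []\<close> \<open>B0 \<noteq> []\<close>] by blast
  qed
  then show ?thesis
    using \<open>k \<ge> 1\<close> \<open>P0 \<noteq> []\<close> \<open>B0 \<noteq> []\<close> by (intro exI[of _ ?pt] exI[of _ ?bt]) auto
qed

end
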